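(* Let $k\ge 3$ be an integer and let $\Omega\subset\mathbb{R}^4$ be a domain with smooth boundary and outer unit normal $\nu$. The boundary value problem for $\mathbb{C}^{2k}$-valued $u$: $\square_1^{(k)}u=f$ on $\Omega$, $D_0^{(k)*}(\nu)u|_{\partial\Omega}=0$, $D_1^{(k)*}(\nu)D_1^{(k)}u|_{\partial\Omega}=0$, is regular (satisfies the Shapiro–Lopatinskii condition).
   Context: Coordinates $x=(x_0,\dots,x_3)$; $\partial_{z_0}=\partial_{x_0}-i\partial_{x_1}$, $\partial_{\bar z_0}=\partial_{x_0}+i\partial_{x_1}$, $\partial_{z_1}=\partial_{x_2}-i\partial_{x_3}$, $\partial_{\bar z_1}=\partial_{x_2}+i\partial_{x_3}$. $D_0^{(k)}(\phi_0,\dots,\phi_k)=(\psi_0,\dots,\psi_{2k-1})$ with $\psi_{2j}=-\partial_{\bar z_1}\phi_j-\partial_{\bar z_0}\phi_{j+1}$, $\psi_{2j+1}=\partial_{z_0}\phi_j-\partial_{z_1}\phi_{j+1}$ ($0\le j\le k-1$); $(D_1^{(k)}\psi)_j=-\partial_{z_0}\psi_{2j}-\partial_{\bar z_1}\psi_{2j+1}+\partial_{z_1}\psi_{2j+2}-\partial_{\bar z_0}\psi_{2j+3}$ ($0\le j\le k-2$). For $D=\sum_jA_j\partial_{x_j}$ with constant matrices, $D^*=-\sum_j\overline{A_j}^{\,t}\partial_{x_j}$ and $D(\nu)=\sum_jA_j\nu_j$. $\square_1^{(k)}=D_0^{(k)}D_0^{(k)*}+D_1^{(k)*}D_1^{(k)}$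 (an elliptic second-order operator). Regularity (Shapiro–Lopatinskii): for each $x\in\partial\Omega$ and nonzero $\xi\in\mathbb{R}^4$ with $\xi\perp\nu_x$, the only bounded solution $u\in C^\infty([0,\infty),\mathbb{C}^{2k})$ of $\square_1^{(k)}(i\xi+n\partial_t)u(t)=0$ with $D_0^{(k)*}(n)u(0)=0$ and $D_1^{(k)*}(n)D_1^{(k)}(i\xi+n\partial_t)u(0)=0$ is $u=0$, where $n$ is the inner unit normal at $x$ and $Q(i\xi+n\partial_t)$ means replacing each $\partial_{x_l}$ by $i\xi_l+n_l\partial_t$. *)

theory Defs
  imports "HOL-Analysis.Analysis"
begin

definition cmp :: "real^4 \<Rightarrow> nat \<Rightarrow> real" where
  "cmp x j = x $ (of_nat j :: 4)"

text \<open>A first-order constant-coefficient operator  D = sum_j A_j d/dx_j  (j<4) is given by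
  its coefficient family  A j r c  (row r, column c of the matrix A_j).
  Vector-valued functions are  nat => (real => complex)  (component index first).
  The partial derivatives are supplied as a family  P :: nat => (real => complex) => (real => complex),
  P l standing for  d/dx_l.\<close>

type_synonym coeffs = "nat \<Rightarrow> nat \<Rightarrow> nat \<Rightarrow> complex"

definition apply_op :: "coeffs \<Rightarrow> nat \<Rightarrow> (nat \<Rightarrow> (real \<Rightarrow> complex) \<Rightarrow> (real \<Rightarrow> complex))
    \<Rightarrow> (nat \<Rightarrow> real \<Rightarrow> complex) \<Rightarrow> (nat \<Rightarrow> real \<Rightarrow> complex)" where
  "apply_op A p P u = (\<lambda>r t. \<Sum>j<4. \<Sum>c<p. A j r c * P j (u c) t)"

definition adj :: "coeffs \<Rightarrow> coeffs" where
  "adj A = (\<lambda>j r c. - cnj (A j c r))"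

definition symb :: "coeffs \<Rightarrow> real^4 \<Rightarrow> nat \<Rightarrow> nat \<Rightarrow> complex" where
  "symb A v = (\<lambda>r c. \<Sum>j<4. A j r c * complex_of_real (cmp v j))"

text \<open>Coefficients of d/dz0, d/dzbar0, d/dz1, d/dzbar1 w.r.t. d/dx0..d/dx3.\<close>
definition dz0 :: "nat \<Rightarrow> complex" where
  "dz0 j = (if j = 0 then 1 else if j = 1 then - \<i> else 0)"
definition dzb0 :: "nat \<Rightarrow> complex" where
  "dzb0 j = (if j = 0 then 1 else if j = 1 then \<i> else 0)"
definition dz1 :: "nat \<Rightarrow> complex" where
  "dz1 j = (if j = 2 then 1 else if j = 3 then - \<i> else 0)"
definition dzb1 :: "nat \<Rightarrow> complex" where
  "dzb1 j = (if j = 2 then 1 else if j = 3 then \<i> else 0)"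

text \<open>D_0^{(k)} : (phi_0..phi_k) |-> (psi_0..psi_{2k-1}),
  psi_{2m} = - dzbar1 phi_m - dzbar0 phi_{m+1},  psi_{2m+1} = dz0 phi_m - dz1 phi_{m+1}.\<close>
definition D0 :: "nat \<Rightarrow> coeffs" where
  "D0 k = (\<lambda>j r c.
     if r < 2 * k then
       (if even r then
          (if c = r div 2 then - dzb1 j else if c = r div 2 + 1 then - dzb0 j else 0)
        else
          (if c = r div 2 then dz0 j else if c = r div 2 + 1 then - dz1 j else 0))
     else 0)"

text \<open>D_1^{(k)} : (psi_0..psi_{2k-1}) |-> ((D_1 psi)_0 .. (D_1 psi)_{k-2}),
  (D_1 psi)_m = - dz0 psi_{2m} - dzbar1 psi_{2m+1} + dz1 psi_{2m+2} - dzbar0 psi_{2m+3}.\<close>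
definition D1 :: "nat \<Rightarrow> coeffs" where
  "D1 k = (\<lambda>j r c.
     if r + 2 \<le> k then
       (if c = 2 * r then - dz0 j
        else if c = 2 * r + 1 then - dzb1 j
        else if c = 2 * r + 2 then dz1 j
        else if c = 2 * r + 3 then - dzb0 j
        else 0)
     else 0)"

definition box1 :: "nat \<Rightarrow> (nat \<Rightarrow> (real \<Rightarrow> complex) \<Rightarrow> (real \<Rightarrow> complex))
    \<Rightarrow> (nat \<Rightarrow> real \<Rightarrow> complex) \<Rightarrow> (nat \<Rightarrow> real \<Rightarrow> complex)" where
  "box1 k P u = (\<lambda>r t.
      apply_op (D0 k) (k + 1) P (apply_op (adj (D0 k)) (2 * k) P u) r t
    + apply_op (adj (D1 k)) (k - 1) P (apply_op (D1 k) (2 * k) P u) r t)"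

definition subst_deriv :: "real^4 \<Rightarrow> real^4 \<Rightarrow> nat \<Rightarrow> (real \<Rightarrow> complex) \<Rightarrow> (real \<Rightarrow> complex)" where
  "subst_deriv \<xi> n l f = (\<lambda>t. \<i> * complex_of_real (cmp \<xi> l) * f t
      + complex_of_real (cmp n l) * vector_derivative f (at t within {0..}))"

definition smooth_halfline :: "(real \<Rightarrow> complex) \<Rightarrow> bool" where
  "smooth_halfline f \<longleftrightarrow> (\<exists>F :: nat \<Rightarrow> real \<Rightarrow> complex.
      (\<forall>t\<ge>0. F 0 t = f t) \<and>
      (\<forall>m. \<forall>t\<ge>0. (F m has_vector_derivative F (Suc m) t) (at t within {0..})))"

text \<open>Shapiro--Lopatinskii regularity of the boundary problem
  box u = f, D_0^*(nu) u = 0, D_1^*(nu) D_1 u = 0 on the boundary, as in the paper: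
  n = - nu x is the inner unit normal.\<close>
definition SL_regular :: "nat \<Rightarrow> (real^4) set \<Rightarrow> (real^4 \<Rightarrow> real^4) \<Rightarrow> bool" where
  "SL_regular k \<Omega> \<nu> \<longleftrightarrow>
    (\<forall>x\<in>frontier \<Omega>. \<forall>\<xi>::real^4. \<xi> \<noteq> 0 \<and> \<xi> \<bullet> \<nu> x = 0 \<longrightarrow>
      (let n = - \<nu> x; P = subst_deriv \<xi> n in
       \<forall>u :: nat \<Rightarrow> real \<Rightarrow> complex.
         (\<forall>c<2*k. smooth_halfline (u c)) \<and>
         (\<forall>c<2*k. bounded (u c ` {0..})) \<and>
         (\<forall>r<2*k. \<forall>t\<ge>0. box1 k P u r t = 0) \<and>
         (\<forall>r<k+1. (\<Sum>c<2*k. symb (adj (D0 k)) n r c * u c 0) = 0) \<and>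
         (\<forall>r<2*k. (\<Sum>c<k-1. symb (adj (D1 k)) n r c * apply_op (D1 k) (2*k) P u c 0) = 0)
         \<longrightarrow> (\<forall>c<2*k. \<forall>t\<ge>0. u c t = 0)))"

end

theory Submission
  imports Defs "HOL-Real_Asymp.Real_Asymp"
begin

text \<open>Along the inner normal ray the boundary problem becomes a system of ODEs in \<open>t\<close>.
  For \<open>u = (\<phi>\<^sub>0, \<dots>, \<phi>\<^sub>2\<^sub>k\<^sub>-\<^sub>1)\<close> put \<open>\<alpha>\<^sub>m = dz1 \<phi>\<^sub>2\<^sub>m - dzb0 \<phi>\<^sub>2\<^sub>m\<^sub>+\<^sub>1\<close> and
  \<open>\<beta>\<^sub>m = dz0 \<phi>\<^sub>2\<^sub>m + dzb1 \<phi>\<^sub>2\<^sub>m\<^sub>+\<^sub>1\<close>; then \<open>D\<^sub>0\<^sup>* u\<close> and \<open>D\<^sub>1 u\<close> are built from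
  \<open>\<alpha>\<close> and \<open>\<beta>\<close>, and the components of \<open>\<box> u\<close> are first-order expressions in
  \<open>\<alpha>\<^sub>m, \<beta>\<^sub>m\<close>. Eliminating gives \<open>\<Delta>\<alpha>\<^sub>m = \<Delta>\<beta>\<^sub>m = 0\<close> for \<open>\<Delta> = d\<^sup>2/dt\<^sup>2 - |\<xi>|\<^sup>2\<close>, hence
  \<open>\<Delta>\<^sup>2 u = 0\<close>, and a bounded solution has the form \<open>(a + b t) exp (-|\<xi>| t)\<close>.
  On these exponential polynomials the \<open>L\<^sup>2(0,\<infinity>)\<close> pairing of \<open>\<box> u\<close> with \<open>u\<close> is,
  after integration by parts, a sum of energies \<open>\<parallel>\<alpha>\<^sub>m\<parallel>\<^sup>2, \<parallel>\<beta>\<^sub>m\<parallel>\<^sup>2\<close> plus boundary terms,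
  and the two boundary conditions make the boundary terms telescope away. So
  \<open>\<alpha> = \<beta> = 0\<close>, which kills the coefficients \<open>b\<close>; the first boundary condition then
  propagates along \<open>m = 0, \<dots>, k - 1\<close> and kills the coefficients \<open>a\<close>.\<close>

section \<open>Towers of derivatives on the half-line\<close>

lemma at_within_nonneg_nontrivial:
  assumes "(t::real) \<ge> 0"
  shows "at t within {0..} \<noteq> bot"
proof -
  have "at_right t \<le> at t within {0..}"
    using assms by (intro at_le) auto
  then show ?thesis
    using trivial_limit_at_right_real by (metis bot.extremum_uniqueI)
qed

definition deriv_tower :: "(nat \<Rightarrow> real \<Rightarrow> complex) \<Rightarrow> bool" where
  "deriv_tower G \<longleftrightarrow>
     (\<forall>i t. t \<ge> 0 \<longrightarrow> (G i has_vector_derivative G (Suc i) t) (at t within {0..}))"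

lemma smooth_halfline_deriv_tower:
  assumes "smooth_halfline f"
  obtains G where "deriv_tower G" "\<And>t. t \<ge> 0 \<Longrightarrow> G 0 t = f t"
  using assms unfolding smooth_halfline_def deriv_tower_def by blast

lemma deriv_tower_lincomb:
  assumes "deriv_tower G" "deriv_tower H"
  shows "deriv_tower (\<lambda>i t. a * G i t + b * H i t)"
  using assms unfolding deriv_tower_def by (auto intro!: derivative_eq_intros)

lemma deriv_tower_vanishes:
  assumes "deriv_tower G" "\<And>t. t \<ge> 0 \<Longrightarrow> G 0 t = 0" "t \<ge> 0"
  shows "G i t = 0"
  using assms(3)
proof (induction i arbitrary: t)
  case 0
  then show ?case using assms(2) by simp
next
  case (Suc i)
  have "(G i has_vector_derivative G (Suc i) t) (at t within {0..})"
    using assms(1) Suc.prems unfolding deriv_tower_def by auto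
  moreover have "(G i has_vector_derivative 0) (at t within {0..})"
    by (rule has_vector_derivative_transform[where f="\<lambda>_. 0"]) (use Suc in auto)
  ultimately show ?case
    using vector_derivative_unique_within[OF at_within_nonneg_nontrivial[OF Suc.prems]] by blast
qed

lemma deriv_tower_unique:
  assumes "deriv_tower G" "deriv_tower H" "\<And>t. t \<ge> 0 \<Longrightarrow> G 0 t = H 0 t" "t \<ge> 0"
  shows "G i t = H i t"
  using deriv_tower_vanishes[OF deriv_tower_lincomb[OF assms(1,2), of 1 "-1"], where i=i and t=t] assms(3,4)
  by auto

lemma vector_derivative_deriv_tower:
  assumes "deriv_tower G" "\<And>t. t \<ge> 0 \<Longrightarrow> f t = G 0 t" "t \<ge> 0"
  shows "vector_derivative f (at t within {0..}) = G 1 t"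
proof -
  have "(G 0 has_vector_derivative G 1 t) (at t within {0..})"
    using assms(1,3) unfolding deriv_tower_def by auto
  then have "(f has_vector_derivative G 1 t) (at t within {0..})"
    by (rule has_vector_derivative_transform[rotated 2]) (use assms in auto)
  then show ?thesis
    by (rule vector_derivative_within[OF at_within_nonneg_nontrivial[OF assms(3)]])
qed

section \<open>Linear ODEs with constant coefficients\<close>

definition expc :: "real \<Rightarrow> real \<Rightarrow> complex" where
  "expc c t = exp (complex_of_real (c * t))"

lemma has_vector_derivative_expc:
  "(expc c has_vector_derivative (of_real c * expc c t)) (at t within S)"
proof -
  have "((\<lambda>z. exp (of_real c * z)) has_field_derivative (of_real c * exp (of_real c * of_real t)))
          (at (of_real t))"
    by (auto intro!: derivative_eq_intros)
  moreover have "expc c = (\<lambda>x. exp (of_real c * of_real x))"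
    by (simp add: expc_def fun_eq_iff)
  ultimately show ?thesis
    using has_vector_derivative_real_field by (simp add: expc_def)
qed

lemma expc_at_0 [simp]: "expc c 0 = 1"
  by (simp add: expc_def)

lemma expc_nonzero [simp]: "expc c t \<noteq> 0"
  by (simp add: expc_def)

lemma expc_mult: "expc c t * expc d t = expc (c + d) t"
  by (simp add: expc_def exp_add[symmetric] algebra_simps)

lemma expc_mult_neg: "expc c t * expc (- c) t = 1"
  using expc_mult[of c t "- c"] by (simp add: expc_def)

lemma norm_expc: "norm (expc c t) = exp (c * t)"
  by (simp add: expc_def exp_of_real)

lemma first_order_ode_solution:
  fixes f h g :: "real \<Rightarrow> complex"
  assumes "\<And>t. t \<ge> 0 \<Longrightarrow> (f has_vector_derivative (of_real c * f t + g t)) (at t within {0..})"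
    and "\<And>t. t \<ge> 0 \<Longrightarrow> (h has_vector_derivative (of_real c * h t + g t)) (at t within {0..})"
    and "t \<ge> 0"
  shows "f t = h t + (f 0 - h 0) * expc c t"
proof -
  define q where "q t = (f t - h t) * expc (-c) t" for t
  have "(q has_vector_derivative 0) (at t within {0..})" if "t \<in> {0..}" for t
  proof -
    have "(q has_vector_derivative ((of_real c * f t + g t) - (of_real c * h t + g t)) * expc (-c) t
            + (f t - h t) * (of_real (-c) * expc (-c) t)) (at t within {0..})"
      unfolding q_def using assms(1,2) that
      by (auto intro!: derivative_eq_intros has_vector_derivative_expc simp: algebra_simps)
    then show ?thesis by (simp add: algebra_simps)
  qed
  then obtain C where C: "\<And>t. t \<in> {0..} \<Longrightarrow> q t = C"
    using has_vector_derivative_zero_constant[of "{0::real..}" q]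
    by (auto simp: convex_real_interval)
  then have "q t = q 0"
    using assms(3) by auto
  then have "(f t - h t) * expc (-c) t = f 0 - h 0"
    by (simp add: q_def)
  then have "(f t - h t) * (expc (-c) t * expc c t) = (f 0 - h 0) * expc c t"
    by (simp add: mult.assoc)
  then show ?thesis
    by (simp add: mult.commute[of "expc (-c) t"] expc_mult_neg algebra_simps)
qed

lemma first_order_ode_resonant:
  fixes f :: "real \<Rightarrow> complex"
  assumes "\<And>t. t \<ge> 0 \<Longrightarrow> (f has_vector_derivative (of_real c * f t + C * expc c t)) (at t within {0..})"
    and "t \<ge> 0"
  shows "f t = (f 0 + C * of_real t) * expc c t"
proof -
  have "((\<lambda>t. C * of_real t * expc c t) has_vector_derivative
          (of_real c * (C * of_real t * expc c t) + C * expc c t)) (at t within {0..})" for t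
    by (rule has_vector_derivative_eq_rhs, (rule derivative_eq_intros has_vector_derivative_expc refl)+)
       (simp add: algebra_simps)
  from first_order_ode_solution[OF assms(1) this assms(2)] show ?thesis
    by (simp add: algebra_simps)
qed

lemma first_order_ode_two_exponentials:
  fixes f :: "real \<Rightarrow> complex"
  assumes c: "c \<noteq> 0"
    and f: "\<And>t. t \<ge> 0 \<Longrightarrow> (f has_vector_derivative
          (of_real (-c) * f t + ((A + B * of_real t) * expc c t + C * expc (-c) t))) (at t within {0..})"
  obtains p q D where
    "\<And>t. t \<ge> 0 \<Longrightarrow> f t = (p + q * of_real t) * expc c t + (D + C * of_real t) * expc (-c) t"
proof -
  define q where "q = B / (2 * of_real c)"
  define p where "p = (A - q) / (2 * of_real c)"
  have pq: "B = 2 * of_real c * q" "A = 2 * of_real c * p + q"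
    using c by (simp_all add: p_def q_def field_simps)
  have "((\<lambda>t. (p + q * of_real t) * expc c t + C * of_real t * expc (-c) t) has_vector_derivative
          (of_real (-c) * ((p + q * of_real t) * expc c t + C * of_real t * expc (-c) t)
            + ((A + B * of_real t) * expc c t + C * expc (-c) t))) (at t within {0..})" for t
    by (rule has_vector_derivative_eq_rhs, (rule derivative_eq_intros has_vector_derivative_expc refl)+)
       (simp add: pq algebra_simps)
  from first_order_ode_solution[OF f this] show thesis
    by (intro that[of p q "f 0 - p"]) (simp add: algebra_simps)
qed

text \<open>The characteristic polynomial \<open>(\<lambda> - s)\<^sup>2 (\<lambda> + s)\<^sup>2\<close> is peeled off one linear factor at a time:
  \<open>(D - s) (D + s)\<^sup>2 G\<close>, \<open>(D + s)\<^sup>2 G\<close>, \<open>(D + s) G\<close> and \<open>G\<close> are computed in turn.\<close>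

lemma biharmonic_ode_solution:
  fixes G :: "nat \<Rightarrow> real \<Rightarrow> complex" and s :: real
  assumes s: "s \<noteq> 0" and tw: "deriv_tower G"
    and eq: "\<And>t. t \<ge> 0 \<Longrightarrow>
      G (Suc (Suc (Suc (Suc 0)))) t - 2 * of_real s ^ 2 * G (Suc (Suc 0)) t + of_real s ^ 4 * G 0 t = 0"
  obtains p q a b where
    "\<And>t. t \<ge> 0 \<Longrightarrow> G 0 t = (p + q * of_real t) * expc s t + (a + b * of_real t) * expc (-s) t"
proof -
  define S where "S = complex_of_real s"
  have d: "\<And>i t. t \<ge> 0 \<Longrightarrow> (G i has_vector_derivative G (Suc i) t) (at t within {0..})"
    using tw deriv_tower_def by auto
  define H3 where "H3 t = G 3 t + S * G 2 t - S^2 * G 1 t - S^3 * G 0 t" for t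
  define H2 where "H2 t = G 2 t + 2 * S * G 1 t + S^2 * G 0 t" for t
  define H1 where "H1 t = G 1 t + S * G 0 t" for t
  have H3: "H3 t = (H3 0 + 0 * of_real t) * expc s t" if "t \<ge> 0" for t
  proof (rule first_order_ode_resonant[OF _ that])
    fix t :: real assume t: "t \<ge> 0"
    show "(H3 has_vector_derivative (of_real s * H3 t + 0 * expc s t)) (at t within {0..})"
      unfolding H3_def numeral_nat
      by (rule has_vector_derivative_eq_rhs, (rule derivative_eq_intros d[OF t] refl)+)
         (use eq[OF t] in \<open>simp add: S_def algebra_simps power2_eq_square power4_eq_xxxx\<close>)
  qed
  have H2: "H2 t = (H2 0 + H3 0 * of_real t) * expc s t" if "t \<ge> 0" for t
  proof (rule first_order_ode_resonant[OF _ that])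
    fix t :: real assume t: "t \<ge> 0"
    show "(H2 has_vector_derivative (of_real s * H2 t + H3 0 * expc s t)) (at t within {0..})"
      unfolding H2_def numeral_nat
      by (rule has_vector_derivative_eq_rhs, (rule derivative_eq_intros d[OF t] refl)+)
         (use H3[OF t] in \<open>simp add: H3_def S_def numeral_nat algebra_simps\<close>)
  qed
  obtain p1 q1 C1 where H1: "\<And>t. t \<ge> 0 \<Longrightarrow>
      H1 t = (p1 + q1 * of_real t) * expc s t + (C1 + 0 * of_real t) * expc (-s) t"
  proof (rule first_order_ode_two_exponentials[OF s])
    fix t :: real assume t: "t \<ge> 0"
    show "(H1 has_vector_derivative
            (of_real (-s) * H1 t + ((H2 0 + H3 0 * of_real t) * expc s t + 0 * expc (-s) t)))
            (at t within {0..})"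
      unfolding H1_def
      by (rule has_vector_derivative_eq_rhs, (rule derivative_eq_intros d[OF t] refl)+)
         (use H2[OF t] in \<open>simp add: H2_def S_def numeral_nat algebra_simps\<close>)
  qed (rule that)
  obtain p q a where "\<And>t. t \<ge> 0 \<Longrightarrow>
      G 0 t = (p + q * of_real t) * expc s t + (a + C1 * of_real t) * expc (-s) t"
  proof (rule first_order_ode_two_exponentials[OF s])
    fix t :: real assume t: "t \<ge> 0"
    show "(G 0 has_vector_derivative
            (of_real (-s) * G 0 t + ((p1 + q1 * of_real t) * expc s t + C1 * expc (-s) t)))
            (at t within {0..})"
      by (rule has_vector_derivative_eq_rhs[OF d[OF t]])
         (use H1[OF t] in \<open>simp add: H1_def S_def algebra_simps\<close>)
  qed (rule that)
  then show thesis by (rule that)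
qed

lemma affine_tendsto_0_imp_0:
  fixes p q :: complex
  assumes "((\<lambda>t::real. p + q * of_real t) \<longlongrightarrow> 0) at_top"
  shows "p = 0 \<and> q = 0"
proof -
  have "((\<lambda>t::real. complex_of_real (inverse t)) \<longlongrightarrow> complex_of_real 0) at_top"
    by (intro tendsto_of_real tendsto_inverse_0_at_top filterlim_ident)
  then have inv: "((\<lambda>t::real. complex_of_real (inverse t)) \<longlongrightarrow> 0) at_top"
    by simp
  have "((\<lambda>t::real. (p + q * of_real t) * of_real (inverse t)) \<longlongrightarrow> 0 * 0) at_top"
    by (intro tendsto_mult assms inv)
  moreover have "((\<lambda>t::real. (p + q * of_real t) * of_real (inverse t)) \<longlongrightarrow> 0 + q) at_top"
  proof -
    have "((\<lambda>t::real. p * of_real (inverse t) + q) \<longlongrightarrow> p * 0 + q) at_top"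
      by (intro tendsto_intros inv)
    moreover have "\<forall>\<^sub>F t in at_top. p * of_real (inverse t) + q = (p + q * of_real t) * of_real (inverse t)"
      using eventually_gt_at_top[of 0] by eventually_elim (auto simp: field_simps)
    ultimately show ?thesis by (simp add: tendsto_cong)
  qed
  ultimately have q: "q = 0"
    using tendsto_unique[OF trivial_limit_at_top_linorder] by fastforce
  then have "((\<lambda>t::real. p) \<longlongrightarrow> 0) at_top" using assms by simp
  then show ?thesis
    using q tendsto_unique[OF trivial_limit_at_top_linorder tendsto_const] by blast
qed

text \<open>Multiplying by \<open>e\<^sup>-\<^sup>s\<^sup>t\<close> isolates the growing mode, which must then tend to \<open>0\<close>.\<close>

lemma bounded_growing_mode_vanishes:
  fixes s :: real and f :: "real \<Rightarrow> complex"
  assumes s: "s > 0" and bd: "\<And>t. t \<ge> 0 \<Longrightarrow> norm (f t) \<le> B"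
    and f: "\<And>t. t \<ge> 0 \<Longrightarrow> f t = (p + q * of_real t) * expc s t + (a + b * of_real t) * expc (-s) t"
  shows "p = 0 \<and> q = 0"
proof (rule affine_tendsto_0_imp_0, rule Lim_null_comparison)
  show "((\<lambda>t. (B + norm a + norm b * t) * exp (- (s * t))) \<longlongrightarrow> 0) at_top"
    using s by real_asymp
  show "\<forall>\<^sub>F t in at_top. norm (p + q * of_real t) \<le> (B + norm a + norm b * t) * exp (- (s * t))"
    using eventually_ge_at_top[of "0::real"]
  proof eventually_elim
    case (elim t)
    have decay: "exp (- (s * t)) \<le> 1" using s elim by auto
    have e: "norm (expc (-s) t) = exp (- (s * t))" by (simp add: norm_expc)
    have ab: "norm ((a + b * of_real t) * expc (-s) t) \<le> (norm a + norm b * t) * exp (- (s * t))"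
      unfolding norm_mult e using elim
      by (intro mult_right_mono) (auto intro: order_trans[OF norm_triangle_ineq] simp: norm_mult)
    have "p + q * of_real t = (f t - (a + b * of_real t) * expc (-s) t) * expc (-s) t"
      using f[OF elim] expc_mult_neg[of s t] by (simp add: algebra_simps)
    also have "norm \<dots> \<le> (norm (f t) + (norm a + norm b * t) * exp (- (s * t))) * exp (- (s * t))"
      unfolding norm_mult e
      by (intro mult_right_mono order_trans[OF norm_triangle_ineq4] add_left_mono ab) auto
    also have "\<dots> \<le> (B + (norm a + norm b * t)) * exp (- (s * t))"
      using bd[OF elim] decay elim by (intro mult_right_mono add_mono mult_left_le) auto
    finally show ?case by (simp add: add.assoc)
  qed
qed

lemma bounded_biharmonic_ode_solution:
  fixes G :: "nat \<Rightarrow> real \<Rightarrow> complex" and s :: real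
  assumes s: "s > 0" and tw: "deriv_tower G" and bd: "bounded (G 0 ` {0..})"
    and eq: "\<And>t. t \<ge> 0 \<Longrightarrow>
      G (Suc (Suc (Suc (Suc 0)))) t - 2 * of_real s ^ 2 * G (Suc (Suc 0)) t + of_real s ^ 4 * G 0 t = 0"
  obtains a b where "\<And>t. t \<ge> 0 \<Longrightarrow> G 0 t = (a + b * of_real t) * expc (-s) t"
proof -
  obtain p q a b where G: "\<And>t. t \<ge> 0 \<Longrightarrow>
      G 0 t = (p + q * of_real t) * expc s t + (a + b * of_real t) * expc (-s) t"
    using biharmonic_ode_solution[OF _ tw eq] s by (metis less_irrefl)
  obtain B where "\<And>t. t \<ge> 0 \<Longrightarrow> norm (G 0 t) \<le> B"
    using bd unfolding bounded_iff by auto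
  then have "p = 0 \<and> q = 0"
    using bounded_growing_mode_vanishes[OF s _ G] by blast
  then show thesis using G that by auto
qed

lemma common_kernel_proportional:
  fixes X Y :: "nat \<Rightarrow> complex"
  assumes kern: "\<And>m. m < k \<Longrightarrow> z1 * X m - zb0 * Y m = 0 \<and> z0 * X m + zb1 * Y m = 0"
    and nz: "\<not> (z1 = 0 \<and> zb0 = 0 \<and> z0 = 0 \<and> zb1 = 0)"
    and "m < k" "m' < k"
  shows "X m * Y m' = X m' * Y m"
proof -
  define d where "d = X m * Y m' - X m' * Y m"
  have "z1 * d = 0" "zb0 * d = 0" "z0 * d = 0" "zb1 * d = 0"
    using kern[OF \<open>m < k\<close>] kern[OF \<open>m' < k\<close>] unfolding d_def by algebra+
  then have "d = 0" using nz by auto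
  then show ?thesis unfolding d_def by simp
qed

text \<open>In the coordinates \<open>a m\<close>, \<open>b m\<close> the pairs stay proportional, so
  \<open>a (m+1) * b m = a m * b (m+1)\<close>; together with \<open>a (m+1) = - b m\<close> this propagates \<open>a 0 = 0\<close>.\<close>

lemma proportional_chain_vanishes:
  fixes X Y :: "nat \<Rightarrow> complex"
  assumes parallel: "\<And>m m'. m < k \<Longrightarrow> m' < k \<Longrightarrow> X m * Y m' = X m' * Y m"
    and det: "N1 * Nb1 + N0 * Nb0 = 1"
    and first: "N1 * X 0 - Nb0 * Y 0 = 0"
    and step: "\<And>m. m + 1 < k \<Longrightarrow> (N1 * X (m+1) - Nb0 * Y (m+1)) + (N0 * X m + Nb1 * Y m) = 0"
    and last: "N0 * X (k-1) + Nb1 * Y (k-1) = 0"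
    and "m < k"
  shows "X m = 0 \<and> Y m = 0"
proof -
  define a where "a m = N1 * X m - Nb0 * Y m" for m
  define b where "b m = N0 * X m + Nb1 * Y m" for m
  have ab: "a (m+1) + b m = 0" if "m + 1 < k" for m
    using step[OF that] by (simp add: a_def b_def)
  have a0: "a m = 0" if "m < k" for m
    using that
  proof (induction m)
    case 0
    then show ?case using first by (simp add: a_def)
  next
    case (Suc m)
    have "X (m+1) * Y m = X m * Y (m+1)"
      using parallel Suc.prems by simp
    then have "a (m+1) * b m = a m * b (m+1)"
      unfolding a_def b_def by algebra
    also have "\<dots> = 0" using Suc by simp
    finally have "b m * b m = 0" using ab[of m] Suc.prems by (simp add: add_eq_0_iff)
    then show ?case using ab[of m] Suc.prems by simp
  qed
  have b0: "b m = 0" if "m < k" for m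
  proof (cases "m + 1 < k")
    case True
    then show ?thesis using ab[OF True] a0[OF True] by simp
  next
    case False
    then have "m = k - 1" using that by simp
    then show ?thesis using last by (simp add: b_def)
  qed
  have "X m = Nb1 * a m + Nb0 * b m" "Y m = - N0 * a m + N1 * b m"
    using det unfolding a_def b_def by algebra+
  then show ?thesis using a0 b0 \<open>m < k\<close> by simp
qed

lemma weighted_boundary_sum_telescopes:
  fixes A B a b wa wb :: "nat \<Rightarrow> complex"
  assumes a0: "a 0 = 0" and bl: "b (k-1) = 0"
    and ab: "\<And>m. m + 1 < k \<Longrightarrow> a (m+1) + b m = 0"
    and AB: "\<And>m. m + 1 < k \<Longrightarrow> A (m+1) = B m"
    and w: "\<And>m. m + 1 < k \<Longrightarrow> wa (m+1) = wb m"
  shows "(\<Sum>m<k. wa m * A m * cnj (a m) + wb m * B m * cnj (b m)) = 0"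
proof (cases k)
  case (Suc K)
  have "(\<Sum>m<k. wa m * A m * cnj (a m)) = (\<Sum>m<K. wa (Suc m) * A (Suc m) * cnj (a (Suc m)))"
    unfolding Suc sum.lessThan_Suc_shift using a0 by simp
  also have "\<dots> = (\<Sum>m<K. - (wb m * B m * cnj (b m)))"
  proof (rule sum.cong[OF refl])
    fix m assume "m \<in> {..<K}"
    then have m: "m + 1 < k" using Suc by simp
    have "a (Suc m) = - b m" using ab[OF m] by (simp add: add_eq_0_iff)
    then show "wa (Suc m) * A (Suc m) * cnj (a (Suc m)) = - (wb m * B m * cnj (b m))"
      using AB[OF m] w[OF m] by simp
  qed
  finally have "(\<Sum>m<k. wa m * A m * cnj (a m)) = - (\<Sum>m<K. wb m * B m * cnj (b m))"
    by (simp add: sum_negf)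
  moreover have "(\<Sum>m<k. wb m * B m * cnj (b m)) = (\<Sum>m<K. wb m * B m * cnj (b m))"
    using bl Suc by simp
  ultimately show ?thesis by (simp add: sum.distrib)
qed simp

lemma sum_lessThan_4: "(\<Sum>j<4. f j) = f 0 + f 1 + f 2 + f (3::nat)"
  by (simp add: numeral_eq_Suc lessThan_Suc add_ac)

lemma inner_cmp: "x \<bullet> y = (\<Sum>j<4. cmp x j * cmp y j)"
proof -
  have h4: "(4::4) = 0" by simp
  show ?thesis unfolding inner_vec_def sum_4 h4 by (simp add: cmp_def numeral_eq_Suc lessThan_Suc)
qed

definition contract :: "(nat \<Rightarrow> complex) \<Rightarrow> (nat \<Rightarrow> nat \<Rightarrow> complex) \<Rightarrow> nat \<Rightarrow> complex" where
  "contract cf X c = (\<Sum>j<4. cf j * X j c)"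

lemma cnj_dz_coeffs[simp]: "cnj (dz0 j) = dzb0 j" "cnj (dzb0 j) = dz0 j" "cnj (dz1 j) = dzb1 j" "cnj (dzb1 j) = dz1 j"
  by (simp_all add: dz0_def dzb0_def dz1_def dzb1_def)

lemma sum_delta_conj: "(\<Sum>c<(N::nat). if c = a \<and> P then f c else 0) = (if P \<and> a < N then f a else 0)"
proof (cases P)
  case True
  have "(\<Sum>c<N. if c = a \<and> P then f c else 0) = (\<Sum>c<N. if c = a then f c else 0)"
    using True by simp
  then show ?thesis using True by (simp add: sum.delta)
qed simp

lemma less_double_cases:
  assumes "(c::nat) < 2*k"
  obtains m where "m < k" "c = 2*m \<or> c = 2*m+1"
proof
  show "c div 2 < k" using assms by auto
  show "c = 2 * (c div 2) \<or> c = 2 * (c div 2) + 1" by presburger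
qed

lemma D1_row_contract:
  assumes "m + 2 \<le> k"
  shows "(\<Sum>c<2*k. \<Sum>j<4. D1 k j m c * X j c) =
     - contract dz0 X (2*m) - contract dzb1 X (2*m+1) + contract dz1 X (2*m+2) - contract dzb0 X (2*m+3)"
proof -
  have pt: "(\<Sum>j<4. D1 k j m c * X j c) =
     (if c = 2*m then - contract dz0 X c else 0) + (if c = 2*m+1 then - contract dzb1 X c else 0)
   + (if c = 2*m+2 then contract dz1 X c else 0) + (if c = 2*m+3 then - contract dzb0 X c else 0)" for c
    using assms by (auto simp: D1_def contract_def sum_negf)
  show ?thesis unfolding pt sum.distrib sum.delta[OF finite_lessThan] using assms by simp
qed

lemma adj_D0_row_contract:
  assumes "r \<le> k"
  shows "(\<Sum>c<2*k. \<Sum>j<4. adj (D0 k) j r c * X j c) =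
     (if r < k then contract dz1 X (2*r) - contract dzb0 X (2*r+1) else 0)
   + (if 1 \<le> r then contract dz0 X (2*r-2) + contract dzb1 X (2*r-1) else 0)"
proof -
  have pt: "(\<Sum>j<4. adj (D0 k) j r c * X j c) =
     (if c = 2*r \<and> c < 2*k then contract dz1 X c else 0) + (if c = 2*r+1 \<and> c < 2*k then - contract dzb0 X c else 0)
   + (if c = 2*r - 2 \<and> 1 \<le> r then contract dz0 X c else 0) + (if c = 2*r-1 \<and> 1 \<le> r then contract dzb1 X c else 0)"
    if c: "c < 2*k" for c
  proof (cases "even c")
    case True
    then obtain q where q: "c = 2*q" by blast
    have cf: "adj (D0 k) j r (2*q) = (if r = q then dz1 j else if r = q+1 then dz0 j else 0)" for j
      using c unfolding q by (auto simp: D0_def adj_def)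
    have e: "(2*q = 2*r) = (q = r)" "(2*q = 2*r - 2 \<and> 1 \<le> r) = (r = q+1)"
      "(2*q = 2*r+1) = False" "(2*q = 2*r - 1 \<and> 1 \<le> r) = False" by arith+
    show ?thesis using c unfolding q cf e by (auto simp: contract_def)
  next
    case False
    then obtain q where q: "c = 2*q+1" using oddE by blast
    have cf: "adj (D0 k) j r (2*q+1) = (if r = q then - dzb0 j else if r = q+1 then dzb1 j else 0)" for j
      using c unfolding q by (auto simp: D0_def adj_def)
    have e: "(2*q+1 = 2*r) = False" "(2*q+1 = 2*r - 2 \<and> 1 \<le> r) = False"
      "(2*q+1 = 2*r+1) = (q = r)" "(2*q+1 = 2*r - 1 \<and> 1 \<le> r) = (r = q+1)" by arith+
    show ?thesis using c unfolding q cf e by (auto simp: contract_def sum_negf)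
  qed
  have "(\<Sum>c<2*k. \<Sum>j<4. adj (D0 k) j r c * X j c) = (\<Sum>c<2*k.
     (if c = 2*r \<and> c < 2*k then contract dz1 X c else 0) + (if c = 2*r+1 \<and> c < 2*k then - contract dzb0 X c else 0)
   + (if c = 2*r - 2 \<and> 1 \<le> r then contract dz0 X c else 0) + (if c = 2*r-1 \<and> 1 \<le> r then contract dzb1 X c else 0))"
    by (rule sum.cong) (auto simp: pt)
  also have "\<dots> = (if r < k then contract dz1 X (2*r) - contract dzb0 X (2*r+1) else 0)
   + (if 1 \<le> r then contract dz0 X (2*r-2) + contract dzb1 X (2*r-1) else 0)"
    unfolding sum.distrib using assms by (auto simp: sum.delta)
  finally show ?thesis .
qed

lemma D0_even_row_contract:
  assumes "m < k"
  shows "(\<Sum>c<k+1. \<Sum>j<4. D0 k j (2*m) c * X j c) = - contract dzb1 X m - contract dzb0 X (m+1)"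
proof -
  have pt: "(\<Sum>j<4. D0 k j (2*m) c * X j c) =
     (if c = m then - contract dzb1 X c else 0) + (if c = m+1 then - contract dzb0 X c else 0)" for c
    using assms by (auto simp: D0_def contract_def sum_negf)
  show ?thesis unfolding pt sum.distrib sum.delta[OF finite_lessThan] using assms by simp
qed

lemma D0_odd_row_contract:
  assumes "m < k"
  shows "(\<Sum>c<k+1. \<Sum>j<4. D0 k j (2*m+1) c * X j c) = contract dz0 X m - contract dz1 X (m+1)"
proof -
  have pt: "(\<Sum>j<4. D0 k j (2*m+1) c * X j c) =
     (if c = m then contract dz0 X c else 0) + (if c = m+1 then - contract dz1 X c else 0)" for c
    using assms by (auto simp: D0_def contract_def sum_negf)
  show ?thesis unfolding pt sum.distrib sum.delta[OF finite_lessThan] using assms by simp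
qed

lemma adj_D1_even_row_contract:
  assumes "m < k"
  shows "(\<Sum>q<k-1. \<Sum>j<4. adj (D1 k) j (2*m) q * X j q) =
    (if m + 2 \<le> k then contract dzb0 X m else 0) - (if 1 \<le> m then contract dzb1 X (m-1) else 0)" (is "_ = ?R")
proof -
  have pt: "(\<Sum>j<4. adj (D1 k) j (2*m) q * X j q) =
     (if q = m then contract dzb0 X q else 0) + (if q = m - 1 \<and> 1 \<le> m then - contract dzb1 X q else 0)"
    if "q < k - 1" for q
  proof -
    have cf: "adj (D1 k) j (2*m) q = (if q = m then dzb0 j else if q = m - 1 \<and> 1 \<le> m then - dzb1 j else 0)" for j
      using assms that by (auto simp: D1_def adj_def)
    show ?thesis unfolding cf using assms that by (auto simp: contract_def sum_negf)
  qed
  have "(\<Sum>q<k-1. \<Sum>j<4. adj (D1 k) j (2*m) q * X j q) = (\<Sum>q<k-1.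
     (if q = m then contract dzb0 X q else 0) + (if q = m - 1 \<and> 1 \<le> m then - contract dzb1 X q else 0))"
    by (rule sum.cong[OF refl], rule pt) simp
  also have "\<dots> = ?R" unfolding sum.distrib sum_delta_conj sum.delta[OF finite_lessThan] using assms by auto
  finally show ?thesis .
qed

lemma adj_D1_odd_row_contract:
  assumes "m < k"
  shows "(\<Sum>q<k-1. \<Sum>j<4. adj (D1 k) j (2*m+1) q * X j q) =
    (if m + 2 \<le> k then contract dz1 X m else 0) + (if 1 \<le> m then contract dz0 X (m-1) else 0)" (is "_ = ?R")
proof -
  have pt: "(\<Sum>j<4. adj (D1 k) j (2*m+1) q * X j q) =
     (if q = m then contract dz1 X q else 0) + (if q = m - 1 \<and> 1 \<le> m then contract dz0 X q else 0)"
    if "q < k - 1" for q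
  proof -
    have cf: "adj (D1 k) j (2*m+1) q = (if q = m then dz1 j else if q = m - 1 \<and> 1 \<le> m then dz0 j else 0)" for j
      using assms that by (auto simp: D1_def adj_def)
    show ?thesis unfolding cf using assms that by (auto simp: contract_def)
  qed
  have "(\<Sum>q<k-1. \<Sum>j<4. adj (D1 k) j (2*m+1) q * X j q) = (\<Sum>q<k-1.
     (if q = m then contract dz1 X q else 0) + (if q = m - 1 \<and> 1 \<le> m then contract dz0 X q else 0))"
    by (rule sum.cong[OF refl], rule pt) simp
  also have "\<dots> = ?R" unfolding sum.distrib sum_delta_conj sum.delta[OF finite_lessThan] using assms by auto
  finally show ?thesis .
qed

section \<open>The boundary problem along one inner normal ray\<close>

text \<open>After the substitution \<open>\<partial>\<^sub>l \<mapsto> i \<xi>\<^sub>l + n\<^sub>l d/dt\<close>, operators act on towers of derivatives \<open>G i\<close>: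
  the vector field \<open>\<Sum>\<^sub>j cf j \<partial>\<^sub>j\<close> becomes \<open>dsub cf\<close>, mixing \<open>G i\<close> and \<open>G (Suc i)\<close>
  with the weights \<open>tsym cf\<close> and \<open>nsym cf\<close>.\<close>

locale boundary_symbol =
  fixes \<xi> n :: "real^4" and s :: real
  assumes s_pos: "s > 0"
    and normal_unit: "n \<bullet> n = 1"
    and tangential: "\<xi> \<bullet> n = 0"
    and freq_norm: "\<xi> \<bullet> \<xi> = s\<^sup>2"
begin

definition xc :: "nat \<Rightarrow> complex" where "xc j = complex_of_real (cmp \<xi> j)"

definition nc :: "nat \<Rightarrow> complex" where "nc j = complex_of_real (cmp n j)"

definition tsym :: "(nat \<Rightarrow> complex) \<Rightarrow> complex" where "tsym cf = \<i> * (\<Sum>j<4. cf j * xc j)"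

definition nsym :: "(nat \<Rightarrow> complex) \<Rightarrow> complex" where "nsym cf = (\<Sum>j<4. cf j * nc j)"

lemma xc_square_sum: "xc 0 * xc 0 + xc 1 * xc 1 + xc 2 * xc 2 + xc 3 * xc 3 = complex_of_real s ^ 2"
proof -
  have "complex_of_real (\<Sum>j<4. cmp \<xi> j * cmp \<xi> j) = complex_of_real (s^2)"
    using freq_norm by (simp add: inner_cmp)
  then show ?thesis unfolding sum_lessThan_4 xc_def by simp
qed

lemma nc_square_sum: "nc 0 * nc 0 + nc 1 * nc 1 + nc 2 * nc 2 + nc 3 * nc 3 = 1"
proof -
  have "complex_of_real (\<Sum>j<4. cmp n j * cmp n j) = 1"
    using normal_unit by (simp add: inner_cmp)
  then show ?thesis unfolding sum_lessThan_4 nc_def by simp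
qed

lemma xc_nc_orth: "xc 0 * nc 0 + xc 1 * nc 1 + xc 2 * nc 2 + xc 3 * nc 3 = 0"
proof -
  have "complex_of_real (\<Sum>j<4. cmp \<xi> j * cmp n j) = 0"
    using tangential by (simp add: inner_cmp)
  then show ?thesis unfolding sum_lessThan_4 xc_def nc_def by simp
qed

lemma tsym_dz0: "tsym dz0 = \<i> * (xc 0 - \<i> * xc 1)" by (simp add: tsym_def sum_lessThan_4 dz0_def)

lemma tsym_dzb0: "tsym dzb0 = \<i> * (xc 0 + \<i> * xc 1)" by (simp add: tsym_def sum_lessThan_4 dzb0_def)

lemma tsym_dz1: "tsym dz1 = \<i> * (xc 2 - \<i> * xc 3)" by (simp add: tsym_def sum_lessThan_4 dz1_def)

lemma tsym_dzb1: "tsym dzb1 = \<i> * (xc 2 + \<i> * xc 3)" by (simp add: tsym_def sum_lessThan_4 dzb1_def)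

lemma nsym_dz0: "nsym dz0 = nc 0 - \<i> * nc 1" by (simp add: nsym_def sum_lessThan_4 dz0_def)

lemma nsym_dzb0: "nsym dzb0 = nc 0 + \<i> * nc 1" by (simp add: nsym_def sum_lessThan_4 dzb0_def)

lemma nsym_dz1: "nsym dz1 = nc 2 - \<i> * nc 3" by (simp add: nsym_def sum_lessThan_4 dz1_def)

lemma nsym_dzb1: "nsym dzb1 = nc 2 + \<i> * nc 3" by (simp add: nsym_def sum_lessThan_4 dzb1_def)

lemmas symbol_simps = tsym_dz0 tsym_dzb0 tsym_dz1 tsym_dzb1 nsym_dz0 nsym_dzb0 nsym_dz1 nsym_dzb1

lemma tsym_quadratic: "tsym dz0 * tsym dzb0 + tsym dz1 * tsym dzb1 = - (complex_of_real s ^ 2)"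
proof -
  have "tsym dz0 * tsym dzb0 + tsym dz1 * tsym dzb1 = - (xc 0 * xc 0 + xc 1 * xc 1 + xc 2 * xc 2 + xc 3 * xc 3)"
    unfolding symbol_simps by (simp add: algebra_simps)
  then show ?thesis unfolding xc_square_sum .
qed

lemma tsym_nsym_cross: "tsym dz0 * nsym dzb0 + nsym dz0 * tsym dzb0 + tsym dz1 * nsym dzb1 + nsym dz1 * tsym dzb1 = 0"
proof -
  have "tsym dz0 * nsym dzb0 + nsym dz0 * tsym dzb0 + tsym dz1 * nsym dzb1 + nsym dz1 * tsym dzb1
      = 2 * \<i> * (xc 0 * nc 0 + xc 1 * nc 1 + xc 2 * nc 2 + xc 3 * nc 3)"
    unfolding symbol_simps by (simp add: algebra_simps)
  then show ?thesis unfolding xc_nc_orth by simp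
qed

lemma nsym_quadratic: "nsym dz0 * nsym dzb0 + nsym dz1 * nsym dzb1 = 1"
proof -
  have "nsym dz0 * nsym dzb0 + nsym dz1 * nsym dzb1 = nc 0 * nc 0 + nc 1 * nc 1 + nc 2 * nc 2 + nc 3 * nc 3"
    unfolding symbol_simps by (simp add: algebra_simps)
  then show ?thesis unfolding nc_square_sum .
qed

lemma cnj_xc[simp]: "cnj (xc j) = xc j" by (simp add: xc_def)

lemma cnj_nc[simp]: "cnj (nc j) = nc j" by (simp add: nc_def)

lemma cnj_symbols:
  "cnj (tsym dz0) = - tsym dzb0" "cnj (tsym dzb0) = - tsym dz0" "cnj (tsym dz1) = - tsym dzb1" "cnj (tsym dzb1) = - tsym dz1"
  "cnj (nsym dz0) = nsym dzb0" "cnj (nsym dzb0) = nsym dz0" "cnj (nsym dz1) = nsym dzb1" "cnj (nsym dzb1) = nsym dz1"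
  unfolding symbol_simps by (simp_all add: algebra_simps)

definition dsub :: "(nat \<Rightarrow> complex) \<Rightarrow> (nat \<Rightarrow> real \<Rightarrow> complex) \<Rightarrow> (nat \<Rightarrow> real \<Rightarrow> complex)" where
  "dsub cf G = (\<lambda>i t. tsym cf * G i t + nsym cf * G (Suc i) t)"

definition op_tower :: "coeffs \<Rightarrow> nat \<Rightarrow> (nat \<Rightarrow> nat \<Rightarrow> real \<Rightarrow> complex) \<Rightarrow> nat \<Rightarrow> nat \<Rightarrow> real \<Rightarrow> complex" where
  "op_tower A p G = (\<lambda>r i t. \<Sum>j<4. \<Sum>c<p. A j r c * (\<i> * xc j * G c i t + nc j * G c (Suc i) t))"

abbreviation "Psub \<equiv> subst_deriv \<xi> n"

lemma Psub_deriv_tower: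
  assumes "deriv_tower G" "\<And>t. t \<ge> 0 \<Longrightarrow> f t = G 0 t" "t \<ge> 0"
  shows "Psub l f t = \<i> * xc l * G 0 t + nc l * G 1 t"
  using vector_derivative_deriv_tower[OF assms] assms(2,3) by (simp add: subst_deriv_def xc_def nc_def)

lemma op_tower_deriv_tower:
  assumes "\<And>c. c < p \<Longrightarrow> deriv_tower (G c)"
  shows "deriv_tower (op_tower A p G r)"
  unfolding deriv_tower_def op_tower_def
proof (intro allI impI)
  fix i and t :: real assume t: "t \<ge> 0"
  have "\<And>c. c < p \<Longrightarrow> (G c i has_vector_derivative G c (Suc i) t) (at t within {0..})"
       "\<And>c. c < p \<Longrightarrow> (G c (Suc i) has_vector_derivative G c (Suc (Suc i)) t) (at t within {0..})"
    using assms t unfolding deriv_tower_def by auto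
  then show "((\<lambda>t. \<Sum>j<4. \<Sum>c<p. A j r c * (\<i> * xc j * G c i t + nc j * G c (Suc i) t)) has_vector_derivative
         (\<Sum>j<4. \<Sum>c<p. A j r c * (\<i> * xc j * G c (Suc i) t + nc j * G c (Suc (Suc i)) t))) (at t within {0..})"
    by (auto intro!: derivative_eq_intros)
qed

lemma apply_op_deriv_tower:
  assumes "\<And>c. c < p \<Longrightarrow> deriv_tower (G c)" "\<And>c t. c < p \<Longrightarrow> t \<ge> 0 \<Longrightarrow> v c t = G c 0 t" "t \<ge> 0"
  shows "apply_op A p Psub v r t = op_tower A p G r 0 t"
  unfolding apply_op_def op_tower_def using Psub_deriv_tower[OF assms(1,2) assms(3)] assms by simp

lemma box1_deriv_tower:
  assumes "\<And>c. c < 2*k \<Longrightarrow> deriv_tower (F c)" "\<And>c t. c < 2*k \<Longrightarrow> t \<ge> 0 \<Longrightarrow> u c t = F c 0 t" "t \<ge> 0"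
  shows "box1 k Psub u r t = op_tower (D0 k) (k+1) (op_tower (adj (D0 k)) (2*k) F) r 0 t
                           + op_tower (adj (D1 k)) (k-1) (op_tower (D1 k) (2*k) F) r 0 t"
proof -
  have a: "apply_op (D0 k) (k + 1) Psub (apply_op (adj (D0 k)) (2 * k) Psub u) r t
      = op_tower (D0 k) (k+1) (op_tower (adj (D0 k)) (2*k) F) r 0 t"
    by (rule apply_op_deriv_tower) (auto intro: op_tower_deriv_tower assms apply_op_deriv_tower[OF assms(1,2)])
  have b: "apply_op (adj (D1 k)) (k - 1) Psub (apply_op (D1 k) (2 * k) Psub u) r t
      = op_tower (adj (D1 k)) (k-1) (op_tower (D1 k) (2*k) F) r 0 t"
    by (rule apply_op_deriv_tower) (auto intro: op_tower_deriv_tower assms apply_op_deriv_tower[OF assms(1,2)])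
  show ?thesis unfolding box1_def a b ..
qed

lemma contract_dsub: "contract cf (\<lambda>j c. \<i> * xc j * G c i t + nc j * G c (Suc i) t) c = dsub cf (G c) i t"
  by (simp add: contract_def dsub_def tsym_def nsym_def sum_lessThan_4 algebra_simps)

lemma op_tower_swap:
  "op_tower A p G r i t =
     (\<Sum>c<p. \<Sum>j<4. A j r c * (\<lambda>j c. \<i> * xc j * G c i t + nc j * G c (Suc i) t) j c)"
  unfolding op_tower_def by (simp add: sum.swap[of _ "{..<4}"])

lemma op_tower_adj_D0_dsub: "c \<le> k \<Longrightarrow> op_tower (adj (D0 k)) (2*k) G c i t =
   (if c < k then dsub dz1 (G (2*c)) i t - dsub dzb0 (G (2*c+1)) i t else 0)
 + (if 1 \<le> c then dsub dz0 (G (2*c-2)) i t + dsub dzb1 (G (2*c-1)) i t else 0)"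
  unfolding op_tower_swap adj_D0_row_contract contract_dsub ..

lemma op_tower_D1_dsub: "m + 2 \<le> k \<Longrightarrow> op_tower (D1 k) (2*k) G m i t =
   - dsub dz0 (G (2*m)) i t - dsub dzb1 (G (2*m+1)) i t + dsub dz1 (G (2*m+2)) i t - dsub dzb0 (G (2*m+3)) i t"
  unfolding op_tower_swap D1_row_contract contract_dsub ..

lemma op_tower_D0_even: "m < k \<Longrightarrow> op_tower (D0 k) (k+1) G (2*m) i t = - dsub dzb1 (G m) i t - dsub dzb0 (G (m+1)) i t"
  unfolding op_tower_swap D0_even_row_contract contract_dsub ..

lemma op_tower_D0_odd: "m < k \<Longrightarrow> op_tower (D0 k) (k+1) G (2*m+1) i t = dsub dz0 (G m) i t - dsub dz1 (G (m+1)) i t"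
  unfolding op_tower_swap D0_odd_row_contract contract_dsub ..

lemma op_tower_adj_D1_even: "m < k \<Longrightarrow> op_tower (adj (D1 k)) (k-1) G (2*m) i t =
  (if m + 2 \<le> k then dsub dzb0 (G m) i t else 0) - (if 1 \<le> m then dsub dzb1 (G (m-1)) i t else 0)"
  unfolding op_tower_swap adj_D1_even_row_contract contract_dsub ..

lemma op_tower_adj_D1_odd: "m < k \<Longrightarrow> op_tower (adj (D1 k)) (k-1) G (2*m+1) i t =
  (if m + 2 \<le> k then dsub dz1 (G m) i t else 0) + (if 1 \<le> m then dsub dz0 (G (m-1)) i t else 0)"
  unfolding op_tower_swap adj_D1_odd_row_contract contract_dsub ..

definition alpha :: "(nat \<Rightarrow> nat \<Rightarrow> real \<Rightarrow> complex) \<Rightarrow> nat \<Rightarrow> nat \<Rightarrow> real \<Rightarrow> complex" where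
  "alpha F m = (\<lambda>i t. dsub dz1 (F (2*m)) i t - dsub dzb0 (F (2*m+1)) i t)"

definition beta :: "(nat \<Rightarrow> nat \<Rightarrow> real \<Rightarrow> complex) \<Rightarrow> nat \<Rightarrow> nat \<Rightarrow> real \<Rightarrow> complex" where
  "beta F m = (\<lambda>i t. dsub dz0 (F (2*m)) i t + dsub dzb1 (F (2*m+1)) i t)"

lemma op_tower_adj_D0_alpha_beta: "c \<le> k \<Longrightarrow> op_tower (adj (D0 k)) (2*k) F c i t =
   (if c < k then alpha F c i t else 0) + (if 1 \<le> c then beta F (c-1) i t else 0)"
proof -
  assume "c \<le> k"
  moreover have "1 \<le> c \<Longrightarrow> 2*c-2 = 2*(c-1) \<and> 2*c-1 = 2*(c-1)+1" by auto
  ultimately show ?thesis unfolding op_tower_adj_D0_dsub[OF \<open>c \<le> k\<close>] alpha_def beta_def by auto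
qed

lemma op_tower_D1_alpha_beta: "m + 2 \<le> k \<Longrightarrow> op_tower (D1 k) (2*k) F m i t = alpha F (m+1) i t - beta F m i t"
proof -
  assume a: "m + 2 \<le> k"
  have e: "2*m+2 = 2*(m+1)" "2*m+3 = 2*(m+1)+1" by auto
  show ?thesis unfolding op_tower_D1_dsub[OF a] alpha_def beta_def e by (simp add: algebra_simps)
qed

text \<open>\<open>alpha F m\<close> enters \<open>\<box>\<close> through \<open>D\<^sub>0 D\<^sub>0\<^sup>*\<close> and, if \<open>m \<ge> 1\<close>, once more through
  \<open>D\<^sub>1\<^sup>* D\<^sub>1\<close>; likewise \<open>beta F m\<close> if \<open>m + 2 \<le> k\<close>.\<close>

definition weight_alpha :: "nat \<Rightarrow> complex" where "weight_alpha m = (if 1 \<le> m then 2 else 1)"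

definition weight_beta :: "nat \<Rightarrow> nat \<Rightarrow> complex" where "weight_beta k m = (if m + 2 \<le> k then 2 else 1)"

definition box_tower :: "nat \<Rightarrow> (nat \<Rightarrow> nat \<Rightarrow> real \<Rightarrow> complex) \<Rightarrow> nat \<Rightarrow> nat \<Rightarrow> real \<Rightarrow> complex" where
  "box_tower k F r = (\<lambda>i t. op_tower (D0 k) (k+1) (op_tower (adj (D0 k)) (2*k) F) r i t
                    + op_tower (adj (D1 k)) (k-1) (op_tower (D1 k) (2*k) F) r i t)"

lemma box_tower_even:
  assumes "m < k"
  shows "box_tower k F (2*m) i t = - (weight_alpha m * dsub dzb1 (alpha F m) i t) - weight_beta k m * dsub dzb0 (beta F m) i t"
proof -
  have w: "\<And>i. op_tower (adj (D0 k)) (2*k) F m i t = alpha F m i t + (if 1 \<le> m then beta F (m-1) i t else 0)"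
          "\<And>i. op_tower (adj (D0 k)) (2*k) F (m+1) i t = (if m + 2 \<le> k then alpha F (m+1) i t else 0) + beta F m i t"
    using assms by (auto simp: op_tower_adj_D0_alpha_beta)
  have x: "\<And>i. m + 2 \<le> k \<Longrightarrow> op_tower (D1 k) (2*k) F m i t = alpha F (m+1) i t - beta F m i t"
          "\<And>i. 1 \<le> m \<Longrightarrow> op_tower (D1 k) (2*k) F (m-1) i t = alpha F m i t - beta F (m-1) i t"
    using assms by (auto simp: op_tower_D1_alpha_beta)
  show ?thesis
    apply (cases "1 \<le> m"; cases "m + 2 \<le> k")
       apply (simp_all only: box_tower_def op_tower_D0_even[OF assms] op_tower_adj_D1_even[OF assms]
          w x if_True if_False dsub_def weight_alpha_def weight_beta_def)
       apply (simp_all add: algebra_simps)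
    done
qed

lemma box_tower_odd:
  assumes "m < k"
  shows "box_tower k F (2*m+1) i t = weight_alpha m * dsub dz0 (alpha F m) i t - weight_beta k m * dsub dz1 (beta F m) i t"
proof -
  have w: "\<And>i. op_tower (adj (D0 k)) (2*k) F m i t = alpha F m i t + (if 1 \<le> m then beta F (m-1) i t else 0)"
          "\<And>i. op_tower (adj (D0 k)) (2*k) F (m+1) i t = (if m + 2 \<le> k then alpha F (m+1) i t else 0) + beta F m i t"
    using assms by (auto simp: op_tower_adj_D0_alpha_beta)
  have x: "\<And>i. m + 2 \<le> k \<Longrightarrow> op_tower (D1 k) (2*k) F m i t = alpha F (m+1) i t - beta F m i t"
          "\<And>i. 1 \<le> m \<Longrightarrow> op_tower (D1 k) (2*k) F (m-1) i t = alpha F m i t - beta F (m-1) i t"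
    using assms by (auto simp: op_tower_D1_alpha_beta)
  show ?thesis
    apply (cases "1 \<le> m"; cases "m + 2 \<le> k")
       apply (simp_all only: box_tower_def op_tower_D0_odd[OF assms] op_tower_adj_D1_odd[OF assms]
          w x if_True if_False dsub_def weight_alpha_def weight_beta_def)
       apply (simp_all add: algebra_simps)
    done
qed

lemma box_tower_deriv_tower:
  assumes "\<And>c. c < 2*k \<Longrightarrow> deriv_tower (F c)"
  shows "deriv_tower (box_tower k F r)"
proof -
  have "deriv_tower (\<lambda>i t. 1 * op_tower (D0 k) (k+1) (op_tower (adj (D0 k)) (2*k) F) r i t
                     + 1 * op_tower (adj (D1 k)) (k-1) (op_tower (D1 k) (2*k) F) r i t)"
    by (intro deriv_tower_lincomb op_tower_deriv_tower assms)
  then show ?thesis by (simp add: box_tower_def)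
qed

subsection \<open>The Laplacian along the ray\<close>

text \<open>The image of the Laplacian \<open>dz0 dzb0 + dz1 dzb1\<close>; it has no first-order term because
  \<open>\<xi> \<bottom> n\<close> (\<open>tsym_nsym_cross\<close>).\<close>

definition lap :: "(nat \<Rightarrow> real \<Rightarrow> complex) \<Rightarrow> nat \<Rightarrow> real \<Rightarrow> complex" where
  "lap G = (\<lambda>i t. G (Suc (Suc i)) t - complex_of_real s ^ 2 * G i t)"

lemma elim_alpha:
  "dsub dz1 (\<lambda>i t. - (c * dsub dzb1 A i t) - d * dsub dzb0 B i t) i t
   - dsub dzb0 (\<lambda>i t. c * dsub dz0 A i t - d * dsub dz1 B i t) i t = - c * lap A i t"
  using tsym_quadratic tsym_nsym_cross nsym_quadratic unfolding dsub_def lap_def by algebra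

lemma elim_beta:
  "dsub dz0 (\<lambda>i t. - (c * dsub dzb1 A i t) - d * dsub dzb0 B i t) i t
   + dsub dzb1 (\<lambda>i t. c * dsub dz0 A i t - d * dsub dz1 B i t) i t = - d * lap B i t"
  using tsym_quadratic tsym_nsym_cross nsym_quadratic unfolding dsub_def lap_def by algebra

lemma lap_even: "dsub dzb1 (\<lambda>i t. dsub dz1 X i t - dsub dzb0 Y i t) i t + dsub dzb0 (\<lambda>i t. dsub dz0 X i t + dsub dzb1 Y i t) i t
   = lap X i t"
  using tsym_quadratic tsym_nsym_cross nsym_quadratic unfolding dsub_def lap_def by algebra

lemma lap_odd: "- dsub dz0 (\<lambda>i t. dsub dz1 X i t - dsub dzb0 Y i t) i t + dsub dz1 (\<lambda>i t. dsub dz0 X i t + dsub dzb1 Y i t) i t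
   = lap Y i t"
  using tsym_quadratic tsym_nsym_cross nsym_quadratic unfolding dsub_def lap_def by algebra

lemma lap_dsub: "lap (\<lambda>i t. dsub a G i t + dsub b H i t) i t = dsub a (lap G) i t + dsub b (lap H) i t"
  by (simp add: lap_def dsub_def algebra_simps)

lemma lap_dsub2: "lap (\<lambda>i t. - dsub a G i t + dsub b H i t) i t = - dsub a (lap G) i t + dsub b (lap H) i t"
  by (simp add: lap_def dsub_def algebra_simps)

lemma lap_lap_eq:
  "lap (lap G) 0 t = G (Suc (Suc (Suc (Suc 0)))) t - 2 * of_real s ^ 2 * G (Suc (Suc 0)) t + of_real s ^ 4 * G 0 t"
  by (simp add: lap_def algebra_simps power2_eq_square power4_eq_xxxx)

lemma lap_alpha_beta_vanish:
  assumes F: "\<And>c. c < 2*k \<Longrightarrow> deriv_tower (F c)"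
    and box: "\<And>r t. r < 2*k \<Longrightarrow> t \<ge> 0 \<Longrightarrow> box_tower k F r 0 t = 0"
    and m: "m < k" and t: "t \<ge> 0"
  shows "lap (alpha F m) i t = 0" "lap (beta F m) i t = 0"
proof -
  have "box_tower k F r i t = 0" if "r < 2*k" for r i
    by (rule deriv_tower_vanishes[OF box_tower_deriv_tower[OF F]]) (use box that t in auto)
  then have box_dsub: "dsub cf (box_tower k F (2*m)) i t = 0" "dsub cf (box_tower k F (2*m+1)) i t = 0"
    for cf i
    using m by (auto simp: dsub_def)
  have e1: "box_tower k F (2*m) = (\<lambda>i t. - (weight_alpha m * dsub dzb1 (alpha F m) i t)
                                          - weight_beta k m * dsub dzb0 (beta F m) i t)"
    using box_tower_even[OF m] by (intro ext) simp
  have e2: "box_tower k F (2*m+1) = (\<lambda>i t. weight_alpha m * dsub dz0 (alpha F m) i t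
                                            - weight_beta k m * dsub dz1 (beta F m) i t)"
    using box_tower_odd[OF m] by (intro ext) simp
  have "- weight_alpha m * lap (alpha F m) i t = 0"
    using elim_alpha[of "weight_alpha m" "alpha F m" "weight_beta k m" "beta F m" i t]
      box_dsub[of dz1] box_dsub[of dzb0]
    unfolding e1 e2 by simp
  then show "lap (alpha F m) i t = 0" by (auto simp: weight_alpha_def split: if_splits)
  have "- weight_beta k m * lap (beta F m) i t = 0"
    using elim_beta[of "weight_alpha m" "alpha F m" "weight_beta k m" "beta F m" i t]
      box_dsub[of dz0] box_dsub[of dzb1]
    unfolding e1 e2 by simp
  then show "lap (beta F m) i t = 0" by (auto simp: weight_beta_def split: if_splits)
qed

subsection \<open>Decaying exponential polynomials\<close>

definition cs :: complex where "cs = complex_of_real s"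

lemma cs_nonzero[simp]: "cs \<noteq> 0" using s_pos by (simp add: cs_def)

lemma cnj_cs[simp]: "cnj cs = cs" by (simp add: cs_def)

definition expoly :: "complex \<times> complex \<Rightarrow> real \<Rightarrow> complex" where
  "expoly p t = (fst p + snd p * of_real t) * expc (-s) t"

definition dpair :: "complex \<times> complex \<Rightarrow> complex \<times> complex" where
  "dpair p = (- cs * fst p + snd p, - cs * snd p)"

definition pscale :: "complex \<Rightarrow> complex \<times> complex \<Rightarrow> complex \<times> complex" where
  "pscale z p = (z * fst p, z * snd p)"

definition expoly_tower :: "complex \<times> complex \<Rightarrow> nat \<Rightarrow> real \<Rightarrow> complex" where
  "expoly_tower p = (\<lambda>i t. expoly ((dpair ^^ i) p) t)"

definition dsub_pair :: "(nat \<Rightarrow> complex) \<Rightarrow> complex \<times> complex \<Rightarrow> complex \<times> complex" where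
  "dsub_pair cf p = pscale (tsym cf) p + pscale (nsym cf) (dpair p)"

lemma expoly_add: "expoly (p + q) t = expoly p t + expoly q t"
  by (simp add: expoly_def algebra_simps)

lemma expoly_diff: "expoly (p - q) t = expoly p t - expoly q t"
  by (simp add: expoly_def algebra_simps)

lemma expoly_pscale: "expoly (pscale z p) t = z * expoly p t"
  by (simp add: expoly_def pscale_def algebra_simps)

lemma expoly_neg: "expoly (- p) t = - expoly p t" by (simp add: expoly_def algebra_simps)

lemma dpair_add: "dpair (p + q) = dpair p + dpair q" by (simp add: dpair_def algebra_simps)

lemma dpair_diff: "dpair (p - q) = dpair p - dpair q" by (simp add: dpair_def algebra_simps)

lemma dpair_pscale: "dpair (pscale z p) = pscale z (dpair p)"
  by (simp add: dpair_def pscale_def algebra_simps)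

lemma dpair_pow_add: "(dpair ^^ i) (p + q) = (dpair ^^ i) p + (dpair ^^ i) q"
  by (induction i) (simp_all add: dpair_add)

lemma dpair_pow_diff: "(dpair ^^ i) (p - q) = (dpair ^^ i) p - (dpair ^^ i) q"
  by (induction i) (simp_all add: dpair_diff)

lemma dpair_pow_pscale: "(dpair ^^ i) (pscale z p) = pscale z ((dpair ^^ i) p)"
  by (induction i) (simp_all add: dpair_pscale)

lemma dpair_pow_commute: "(dpair ^^ i) (dpair p) = dpair ((dpair ^^ i) p)" by (induction i) simp_all

lemma expoly_tower_add: "expoly_tower (p + q) i t = expoly_tower p i t + expoly_tower q i t"
  by (simp add: expoly_tower_def dpair_pow_add expoly_add)

lemma expoly_tower_diff: "expoly_tower (p - q) i t = expoly_tower p i t - expoly_tower q i t"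
  by (simp add: expoly_tower_def dpair_pow_diff expoly_diff)

lemma expoly_tower_pscale: "expoly_tower (pscale z p) i t = z * expoly_tower p i t"
  by (simp add: expoly_tower_def dpair_pow_pscale expoly_pscale)

lemma expoly_tower_Suc: "expoly_tower p (Suc i) t = expoly_tower (dpair p) i t"
  by (simp add: expoly_tower_def funpow_Suc_right dpair_pow_commute del: funpow.simps)

lemma expoly_tower_0: "expoly_tower p 0 t = expoly p t" by (simp add: expoly_tower_def)

lemma expoly_tower_zero: "expoly_tower 0 i t = 0"
proof -
  have "(dpair ^^ i) 0 = 0" by (induction i) (simp_all add: dpair_def zero_prod_def)
  then show ?thesis by (simp add: expoly_tower_def expoly_def zero_prod_def)
qed

lemma dsub_expoly_tower: "dsub cf (expoly_tower p) i t = expoly_tower (dsub_pair cf p) i t"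
  by (simp add: dsub_def dsub_pair_def expoly_tower_add expoly_tower_pscale expoly_tower_Suc)

lemma has_vector_derivative_expoly: "((expoly p) has_vector_derivative expoly (dpair p) t) (at t within S)"
  unfolding expoly_def dpair_def
  apply (rule has_vector_derivative_eq_rhs)
   apply (rule derivative_eq_intros has_vector_derivative_expc refl)+
  by (simp add: cs_def algebra_simps)

lemma expoly_tower_deriv_tower: "deriv_tower (expoly_tower p)"
  unfolding deriv_tower_def expoly_tower_def using has_vector_derivative_expoly by (simp add: dpair_pow_commute)

lemma expoly_eq_0_imp: assumes "\<And>t. t \<ge> 0 \<Longrightarrow> expoly p t = 0" shows "p = 0"
proof -
  have "expoly p 0 = 0" "expoly p 1 = 0" using assms by auto
  then show ?thesis by (cases p) (simp add: expoly_def zero_prod_def)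
qed

lemma lap_expoly_tower: "lap (expoly_tower p) 0 0 = - 2 * cs * snd p"
  by (simp add: lap_def expoly_tower_def expoly_def dpair_def cs_def algebra_simps power2_eq_square)

lemma bounded_solution_expoly:
  assumes F: "\<And>c. c < 2*k \<Longrightarrow> deriv_tower (F c)"
    and box: "\<And>r t. r < 2*k \<Longrightarrow> t \<ge> 0 \<Longrightarrow> box_tower k F r 0 t = 0"
    and bd: "bounded (F c 0 ` {0..})"
    and c: "c < 2*k"
  shows "\<exists>p. \<forall>t\<ge>0. F c 0 t = expoly p t"
proof -
  obtain m where m: "m < k" and cm: "c = 2*m \<or> c = 2*m+1"
    using c by (rule less_double_cases)
  have lap_even_F: "lap (F (2*m)) = (\<lambda>i t. dsub dzb1 (alpha F m) i t + dsub dzb0 (beta F m) i t)"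
    unfolding alpha_def beta_def by (intro ext) (rule lap_even[symmetric])
  have lap_odd_F: "lap (F (2*m+1)) = (\<lambda>i t. - dsub dz0 (alpha F m) i t + dsub dz1 (beta F m) i t)"
    unfolding alpha_def beta_def by (intro ext) (rule lap_odd[symmetric])
  have "lap (lap (F c)) 0 t = 0" if t: "t \<ge> 0" for t
    using cm
  proof
    assume c_even: "c = 2*m"
    show ?thesis
      unfolding c_even lap_even_F lap_dsub using lap_alpha_beta_vanish[OF F box m t] by (simp add: dsub_def)
  next
    assume c_odd: "c = 2*m+1"
    show ?thesis
      unfolding c_odd lap_odd_F lap_dsub2 using lap_alpha_beta_vanish[OF F box m t] by (simp add: dsub_def)
  qed
  then obtain a b where "\<And>t. t \<ge> 0 \<Longrightarrow> F c 0 t = (a + b * of_real t) * expc (-s) t"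
    using bounded_biharmonic_ode_solution[OF s_pos F[OF c] bd] lap_lap_eq by metis
  then show ?thesis
    by (intro exI[of _ "(a, b)"]) (simp add: expoly_def)
qed

subsection \<open>The energy identity\<close>

text \<open>\<open>pairing p q\<close> is the \<open>L\<^sup>2(0,\<infinity>)\<close> inner product of \<open>expoly p\<close> and \<open>expoly q\<close>
  in closed form, so \<open>pairing_by_parts\<close> is integration by parts.\<close>

definition pairing :: "complex \<times> complex \<Rightarrow> complex \<times> complex \<Rightarrow> complex" where
  "pairing p q = fst p * cnj (fst q) / (2 * cs) + (fst p * cnj (snd q) + snd p * cnj (fst q)) / (4 * cs^2)
           + snd p * cnj (snd q) / (4 * cs^3)"

lemma pairing_by_parts: "pairing (dpair p) q + pairing p (dpair q) = - (fst p * cnj (fst q))"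
  by (simp add: pairing_def dpair_def field_simps power2_eq_square power3_eq_cube)

lemma pairing_add_left: "pairing (p + q) r = pairing p r + pairing q r"
  by (simp add: pairing_def algebra_simps add_divide_distrib)

lemma pairing_diff_left: "pairing (p - q) r = pairing p r - pairing q r"
  by (simp add: pairing_def algebra_simps diff_divide_distrib)

lemma pairing_neg_left: "pairing (- p) r = - pairing p r" by (simp add: pairing_def field_simps)

lemma pairing_pscale_left: "pairing (pscale z p) r = z * pairing p r"
  by (simp add: pairing_def pscale_def algebra_simps times_divide_eq_right)

lemma pairing_add_right: "pairing r (p + q) = pairing r p + pairing r q"
  by (simp add: pairing_def algebra_simps add_divide_distrib)

lemma pairing_diff_right: "pairing r (p - q) = pairing r p - pairing r q"
  by (simp add: pairing_def algebra_simps diff_divide_distrib)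

lemma pairing_pscale_right: "pairing r (pscale z p) = cnj z * pairing r p"
  by (simp add: pairing_def pscale_def algebra_simps times_divide_eq_right)

lemma pairing_dsub_pair:
  assumes "cnj (tsym cf') = - tsym cf" "cnj (nsym cf') = nsym cf"
  shows "pairing (dsub_pair cf p) q = - pairing p (dsub_pair cf' q) - nsym cf * fst p * cnj (fst q)"
proof -
  have "pairing (dsub_pair cf p) q + pairing p (dsub_pair cf' q) = nsym cf * (pairing (dpair p) q + pairing p (dpair q))"
    unfolding dsub_pair_def pairing_add_left pairing_add_right pairing_pscale_left pairing_pscale_right assms by (simp add: algebra_simps)
  then have "pairing (dsub_pair cf p) q + pairing p (dsub_pair cf' q) = - (nsym cf * fst p * cnj (fst q))"
    unfolding pairing_by_parts by (simp add: algebra_simps)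
  then show ?thesis by algebra
qed

lemma pairing_self: "pairing p p = complex_of_real ((s^2 * (cmod (fst p))^2 + (cmod (cs * fst p + snd p))^2) / (4 * s^3))"
proof -
  obtain a b where p: "p = (a, b)" by (cases p)
  have "(cmod (cs * a + b))^2 = cs^2 * (a * cnj a) + cs * (a * cnj b + b * cnj a) + b * cnj b"
    unfolding complex_norm_square by (simp add: algebra_simps power2_eq_square)
  moreover have "complex_of_real ((cmod a)^2) = a * cnj a" "complex_of_real ((cmod b)^2) = b * cnj b"
    using complex_norm_square by metis+
  ultimately show ?thesis unfolding p pairing_def using s_pos
    by (simp add: cs_def field_simps power2_eq_square power3_eq_cube)
qed

lemma Re_pairing_self_nonneg: "Re (pairing p p) \<ge> 0"
  unfolding pairing_self using s_pos by simp

lemma Im_pairing_self: "Im (pairing p p) = 0"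
  unfolding pairing_self by simp

lemma Re_pairing_self_eq_0_imp:
  assumes "Re (pairing p p) = 0"
  shows "p = 0"
proof -
  have "s^2 * (cmod (fst p))^2 + (cmod (cs * fst p + snd p))^2 = 0"
    using assms s_pos unfolding pairing_self by simp
  moreover have "s^2 * (cmod (fst p))^2 \<ge> 0" "(cmod (cs * fst p + snd p))^2 \<ge> 0" by simp_all
  ultimately have "s^2 * (cmod (fst p))^2 = 0" "(cmod (cs * fst p + snd p))^2 = 0" by linarith+
  then have "fst p = 0" "snd p = 0" using s_pos by auto
  then show ?thesis by (simp add: prod_eq_iff)
qed

lemma pairing_dsub_pair_dzb1: "pairing (dsub_pair dzb1 p) q = - pairing p (dsub_pair dz1 q) - nsym dzb1 * fst p * cnj (fst q)"
  by (rule pairing_dsub_pair) (simp_all add: cnj_symbols)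

lemma pairing_dsub_pair_dzb0: "pairing (dsub_pair dzb0 p) q = - pairing p (dsub_pair dz0 q) - nsym dzb0 * fst p * cnj (fst q)"
  by (rule pairing_dsub_pair) (simp_all add: cnj_symbols)

lemma pairing_dsub_pair_dz0: "pairing (dsub_pair dz0 p) q = - pairing p (dsub_pair dzb0 q) - nsym dz0 * fst p * cnj (fst q)"
  by (rule pairing_dsub_pair) (simp_all add: cnj_symbols)

lemma pairing_dsub_pair_dz1: "pairing (dsub_pair dz1 p) q = - pairing p (dsub_pair dzb1 q) - nsym dz1 * fst p * cnj (fst q)"
  by (rule pairing_dsub_pair) (simp_all add: cnj_symbols)

lemma pair_energy:
  fixes x y :: "complex \<times> complex" and wa wb :: complex
  defines "a \<equiv> dsub_pair dz1 x - dsub_pair dzb0 y" and "b \<equiv> dsub_pair dz0 x + dsub_pair dzb1 y"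
  shows "pairing (- pscale wa (dsub_pair dzb1 a) - pscale wb (dsub_pair dzb0 b)) x
           + pairing (pscale wa (dsub_pair dz0 a) - pscale wb (dsub_pair dz1 b)) y
     = wa * pairing a a + wb * pairing b b + wa * fst a * cnj (nsym dz1 * fst x - nsym dzb0 * fst y)
       + wb * fst b * cnj (nsym dz0 * fst x + nsym dzb1 * fst y)"
proof -
  have aa: "pairing a a = pairing a (dsub_pair dz1 x) - pairing a (dsub_pair dzb0 y)" by (simp only: a_def pairing_diff_right)
  have bb: "pairing b b = pairing b (dsub_pair dz0 x) + pairing b (dsub_pair dzb1 y)" by (simp only: b_def pairing_add_right)
  show ?thesis
    unfolding pairing_diff_left pairing_neg_left pairing_pscale_left aa bb
      pairing_dsub_pair_dzb1 pairing_dsub_pair_dzb0 pairing_dsub_pair_dz0 pairing_dsub_pair_dz1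
      complex_cnj_diff complex_cnj_add complex_cnj_mult cnj_symbols
    by (simp add: algebra_simps)
qed

definition alpha_pair :: "(nat \<Rightarrow> complex \<times> complex) \<Rightarrow> nat \<Rightarrow> complex \<times> complex" where
  "alpha_pair P m = dsub_pair dz1 (P (2*m)) - dsub_pair dzb0 (P (2*m+1))"

definition beta_pair :: "(nat \<Rightarrow> complex \<times> complex) \<Rightarrow> nat \<Rightarrow> complex \<times> complex" where
  "beta_pair P m = dsub_pair dz0 (P (2*m)) + dsub_pair dzb1 (P (2*m+1))"

definition alpha_nrm :: "(nat \<Rightarrow> complex \<times> complex) \<Rightarrow> nat \<Rightarrow> complex" where
  "alpha_nrm P m = nsym dz1 * fst (P (2*m)) - nsym dzb0 * fst (P (2*m+1))"

definition beta_nrm :: "(nat \<Rightarrow> complex \<times> complex) \<Rightarrow> nat \<Rightarrow> complex" where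
  "beta_nrm P m = nsym dz0 * fst (P (2*m)) + nsym dzb1 * fst (P (2*m+1))"

lemma dsub_pair_0: "dsub_pair cf 0 = 0"
  by (simp add: dsub_pair_def pscale_def dpair_def zero_prod_def)

lemma fst_dsub_pair: "fst (dsub_pair cf p) = tsym cf * fst p + nsym cf * (- cs * fst p + snd p)"
  by (simp add: dsub_pair_def pscale_def dpair_def)

lemma alpha_beta_expoly_tower:
  assumes FT: "\<And>c i t. c < 2*k \<Longrightarrow> t \<ge> 0 \<Longrightarrow> F c i t = expoly_tower (P c) i t"
    and "m < k" "t \<ge> 0"
  shows "alpha F m i t = expoly_tower (alpha_pair P m) i t"
    and "beta F m i t = expoly_tower (beta_pair P m) i t"
  using assms
  by (simp_all add: alpha_def beta_def alpha_pair_def beta_pair_def dsub_def FT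
      expoly_tower_diff expoly_tower_add dsub_expoly_tower[symmetric])

lemma box_pair_equations:
  assumes FT: "\<And>c i t. c < 2*k \<Longrightarrow> t \<ge> 0 \<Longrightarrow> F c i t = expoly_tower (P c) i t"
    and box: "\<And>r t. r < 2*k \<Longrightarrow> t \<ge> 0 \<Longrightarrow> box_tower k F r 0 t = 0"
    and m: "m < k"
  shows "- pscale (weight_alpha m) (dsub_pair dzb1 (alpha_pair P m))
           - pscale (weight_beta k m) (dsub_pair dzb0 (beta_pair P m)) = 0" (is "?even = 0")
    and "pscale (weight_alpha m) (dsub_pair dz0 (alpha_pair P m))
           - pscale (weight_beta k m) (dsub_pair dz1 (beta_pair P m)) = 0" (is "?odd = 0")
proof -
  have dsub_pair_tower: "dsub cf (alpha F m) i t = expoly_tower (dsub_pair cf (alpha_pair P m)) i t"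
    "dsub cf (beta F m) i t = expoly_tower (dsub_pair cf (beta_pair P m)) i t"
    if "t \<ge> 0" for cf i t
    using that m by (simp_all add: dsub_def alpha_beta_expoly_tower[OF FT] dsub_expoly_tower[symmetric])
  have "expoly ?even t = box_tower k F (2*m) 0 t" if "t \<ge> 0" for t
    unfolding box_tower_even[OF m] dsub_pair_tower[OF that] expoly_tower_0[symmetric]
      expoly_tower_diff expoly_tower_pscale
    by (simp add: expoly_tower_def expoly_neg expoly_pscale)
  then show "?even = 0"
    using box[of "2*m"] m by (intro expoly_eq_0_imp) simp
  have "expoly ?odd t = box_tower k F (2*m+1) 0 t" if "t \<ge> 0" for t
    unfolding box_tower_odd[OF m] dsub_pair_tower[OF that] expoly_tower_0[symmetric]
      expoly_tower_diff expoly_tower_pscale ..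
  then show "?odd = 0"
    using box[of "2*m+1"] m by (intro expoly_eq_0_imp) simp
qed

definition energy :: "nat \<Rightarrow> (nat \<Rightarrow> complex \<times> complex) \<Rightarrow> nat \<Rightarrow> complex" where
  "energy k P m = weight_alpha m * pairing (alpha_pair P m) (alpha_pair P m)
                  + weight_beta k m * pairing (beta_pair P m) (beta_pair P m)"

lemma energy_identity:
  assumes FT: "\<And>c i t. c < 2*k \<Longrightarrow> t \<ge> 0 \<Longrightarrow> F c i t = expoly_tower (P c) i t"
    and box: "\<And>r t. r < 2*k \<Longrightarrow> t \<ge> 0 \<Longrightarrow> box_tower k F r 0 t = 0"
    and m: "m < k"
  shows "energy k P m + (weight_alpha m * fst (alpha_pair P m) * cnj (alpha_nrm P m)
           + weight_beta k m * fst (beta_pair P m) * cnj (beta_nrm P m)) = 0"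
proof -
  have "0 = pairing (- pscale (weight_alpha m) (dsub_pair dzb1 (alpha_pair P m))
             - pscale (weight_beta k m) (dsub_pair dzb0 (beta_pair P m))) (P (2*m))
          + pairing (pscale (weight_alpha m) (dsub_pair dz0 (alpha_pair P m))
             - pscale (weight_beta k m) (dsub_pair dz1 (beta_pair P m))) (P (2*m+1))"
    by (simp only: box_pair_equations[OF FT box m]) (simp add: pairing_def zero_prod_def)
  also have "\<dots> = energy k P m + (weight_alpha m * fst (alpha_pair P m) * cnj (alpha_nrm P m)
           + weight_beta k m * fst (beta_pair P m) * cnj (beta_nrm P m))"
    unfolding energy_def alpha_nrm_def beta_nrm_def alpha_pair_def beta_pair_def
    by (rule pair_energy[THEN trans]) simp
  finally show ?thesis by simp
qed

lemma Re_energy_nonneg: "Re (energy k P m) \<ge> 0"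
  by (simp add: energy_def weight_alpha_def weight_beta_def Re_pairing_self_nonneg Im_pairing_self)

lemma Re_energy_eq_0_imp:
  assumes "Re (energy k P m) = 0"
  shows "alpha_pair P m = 0" "beta_pair P m = 0"
proof -
  define ea eb where "ea = Re (pairing (alpha_pair P m) (alpha_pair P m))"
    and "eb = Re (pairing (beta_pair P m) (beta_pair P m))"
  have "Re (weight_alpha m) * ea + Re (weight_beta k m) * eb = 0"
    using assms by (simp add: energy_def Im_pairing_self ea_def eb_def)
  moreover have "ea \<le> Re (weight_alpha m) * ea" "eb \<le> Re (weight_beta k m) * eb"
    "ea \<ge> 0" "eb \<ge> 0"
    using mult_right_mono[of 1 "Re (weight_alpha m)" ea] mult_right_mono[of 1 "Re (weight_beta k m)" eb]
    by (simp_all add: ea_def eb_def Re_pairing_self_nonneg weight_alpha_def weight_beta_def)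
  ultimately have "ea = 0" "eb = 0" by linarith+
  then show "alpha_pair P m = 0" "beta_pair P m = 0"
    by (simp_all add: ea_def eb_def Re_pairing_self_eq_0_imp)
qed

definition boundary_conditions :: "nat \<Rightarrow> (nat \<Rightarrow> complex \<times> complex) \<Rightarrow> bool" where
  "boundary_conditions k P \<longleftrightarrow>
     alpha_nrm P 0 = 0 \<and> beta_nrm P (k-1) = 0 \<and>
     (\<forall>m. m + 1 < k \<longrightarrow> alpha_nrm P (m+1) + beta_nrm P m = 0 \<and>
                         fst (alpha_pair P (m+1)) = fst (beta_pair P m))"

lemma alpha_beta_pairs_vanish:
  assumes FT: "\<And>c i t. c < 2*k \<Longrightarrow> t \<ge> 0 \<Longrightarrow> F c i t = expoly_tower (P c) i t"
    and box: "\<And>r t. r < 2*k \<Longrightarrow> t \<ge> 0 \<Longrightarrow> box_tower k F r 0 t = 0"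
    and bc: "boundary_conditions k P"
    and m: "m < k"
  shows "alpha_pair P m = 0 \<and> beta_pair P m = 0"
proof -
  define bdry where "bdry m = weight_alpha m * fst (alpha_pair P m) * cnj (alpha_nrm P m)
             + weight_beta k m * fst (beta_pair P m) * cnj (beta_nrm P m)" for m
  have "(\<Sum>m<k. bdry m) = 0"
    using bc unfolding boundary_conditions_def bdry_def
    by (intro weighted_boundary_sum_telescopes) (auto simp: weight_alpha_def weight_beta_def)
  moreover have "energy k P m = - bdry m" if "m < k" for m
    unfolding bdry_def by (rule eq_neg_iff_add_eq_0[THEN iffD2, OF energy_identity[OF FT box that]])
  ultimately have "(\<Sum>m<k. energy k P m) = 0"
    by (simp add: sum_negf)
  then have "(\<Sum>m<k. Re (energy k P m)) = 0"
    by (metis Re_sum zero_complex.sel(1))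
  then have "Re (energy k P m) = 0"
    using m Re_energy_nonneg by (simp add: sum_nonneg_eq_0_iff)
  then show ?thesis using Re_energy_eq_0_imp by blast
qed

lemma nc_eq_0_if_cs_nc_eq_i_xc: "cs * nc j = \<i> * xc j \<Longrightarrow> nc j = 0"
proof -
  assume h: "cs * nc j = \<i> * xc j"
  have "Re (cs * nc j) = Re (\<i> * xc j)" using h by simp
  then have "s * cmp n j = 0" by (simp add: cs_def nc_def xc_def)
  then show ?thesis using s_pos by (simp add: nc_def)
qed

lemma boundary_symbol_nonzero: "\<not> (tsym dz1 - cs * nsym dz1 = 0 \<and> tsym dzb0 - cs * nsym dzb0 = 0 \<and> tsym dz0 - cs * nsym dz0 = 0
                   \<and> tsym dzb1 - cs * nsym dzb1 = 0)"
proof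
  assume E: "tsym dz1 - cs * nsym dz1 = 0 \<and> tsym dzb0 - cs * nsym dzb0 = 0 \<and> tsym dz0 - cs * nsym dz0 = 0
                   \<and> tsym dzb1 - cs * nsym dzb1 = 0"
  have "\<i> * \<i> = (-1::complex)" by simp
  have "cs * nc 0 = \<i> * xc 0" "cs * nc 1 = \<i> * xc 1" "cs * nc 2 = \<i> * xc 2" "cs * nc 3 = \<i> * xc 3"
    using E \<open>\<i> * \<i> = -1\<close> unfolding symbol_simps by algebra+
  then have "nc 0 = 0" "nc 1 = 0" "nc 2 = 0" "nc 3 = 0" using nc_eq_0_if_cs_nc_eq_i_xc by blast+
  then show False using nc_square_sum by simp
qed

lemma snd_vanishes_if_alpha_beta_pairs_vanish:
  assumes "alpha_pair P m = 0" "beta_pair P m = 0"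
  shows "snd (P (2*m)) = 0" "snd (P (2*m+1)) = 0"
proof -
  have "lap (expoly_tower (P (2*m))) 0 0 =
      dsub dzb1 (\<lambda>i t. dsub dz1 (expoly_tower (P (2*m))) i t - dsub dzb0 (expoly_tower (P (2*m+1))) i t) 0 0
    + dsub dzb0 (\<lambda>i t. dsub dz0 (expoly_tower (P (2*m))) i t + dsub dzb1 (expoly_tower (P (2*m+1))) i t) 0 0"
    by (rule lap_even[symmetric])
  also have "\<dots> = 0"
    unfolding dsub_expoly_tower expoly_tower_diff[symmetric] expoly_tower_add[symmetric]
      alpha_pair_def[symmetric] beta_pair_def[symmetric]
    by (simp add: assms dsub_pair_0 expoly_tower_zero)
  finally show "snd (P (2*m)) = 0" by (simp add: lap_expoly_tower)
  have "lap (expoly_tower (P (2*m+1))) 0 0 =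
      - dsub dz0 (\<lambda>i t. dsub dz1 (expoly_tower (P (2*m))) i t - dsub dzb0 (expoly_tower (P (2*m+1))) i t) 0 0
    + dsub dz1 (\<lambda>i t. dsub dz0 (expoly_tower (P (2*m))) i t + dsub dzb1 (expoly_tower (P (2*m+1))) i t) 0 0"
    by (rule lap_odd[symmetric])
  also have "\<dots> = 0"
    unfolding dsub_expoly_tower expoly_tower_diff[symmetric] expoly_tower_add[symmetric]
      alpha_pair_def[symmetric] beta_pair_def[symmetric]
    by (simp add: assms dsub_pair_0 expoly_tower_zero)
  finally show "snd (P (2*m+1)) = 0" by (simp add: lap_expoly_tower)
qed

lemma fst_vanishes_if_alpha_beta_pairs_vanish:
  assumes ab: "\<And>m. m < k \<Longrightarrow> alpha_pair P m = 0 \<and> beta_pair P m = 0"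
    and bc: "boundary_conditions k P"
    and m: "m < k"
  shows "fst (P (2*m)) = 0 \<and> fst (P (2*m+1)) = 0"
proof (rule proportional_chain_vanishes[where X = "\<lambda>m. fst (P (2*m))" and Y = "\<lambda>m. fst (P (2*m+1))"])
  have kern: "(tsym dz1 - cs * nsym dz1) * fst (P (2*m)) - (tsym dzb0 - cs * nsym dzb0) * fst (P (2*m+1)) = 0 \<and>
        (tsym dz0 - cs * nsym dz0) * fst (P (2*m)) + (tsym dzb1 - cs * nsym dzb1) * fst (P (2*m+1)) = 0"
    if "m < k" for m
  proof -
    have snd0: "snd (P (2*m)) = 0" "snd (P (2*m+1)) = 0"
      using snd_vanishes_if_alpha_beta_pairs_vanish[of P m] ab[OF that] by simp_all
    have "fst (alpha_pair P m) = (tsym dz1 - cs * nsym dz1) * fst (P (2*m)) - (tsym dzb0 - cs * nsym dzb0) * fst (P (2*m+1))"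
      "fst (beta_pair P m) = (tsym dz0 - cs * nsym dz0) * fst (P (2*m)) + (tsym dzb1 - cs * nsym dzb1) * fst (P (2*m+1))"
      using snd0 by (simp_all add: alpha_pair_def beta_pair_def fst_dsub_pair algebra_simps)
    then show ?thesis using ab[OF that] by (simp add: zero_prod_def)
  qed
  show "fst (P (2*m)) * fst (P (2*m'+1)) = fst (P (2*m')) * fst (P (2*m+1))"
    if "m < k" "m' < k" for m m'
    using common_kernel_proportional[where X = "\<lambda>m. fst (P (2*m))" and Y = "\<lambda>m. fst (P (2*m+1))",
        OF kern boundary_symbol_nonzero that] .
  show "nsym dz1 * nsym dzb1 + nsym dz0 * nsym dzb0 = 1"
    using nsym_quadratic by (simp add: algebra_simps)
qed (use bc m in \<open>simp_all add: boundary_conditions_def alpha_nrm_def beta_nrm_def\<close>)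

lemma expoly_solution_trivial:
  assumes FT: "\<And>c i t. c < 2*k \<Longrightarrow> t \<ge> 0 \<Longrightarrow> F c i t = expoly_tower (P c) i t"
    and box: "\<And>r t. r < 2*k \<Longrightarrow> t \<ge> 0 \<Longrightarrow> box_tower k F r 0 t = 0"
    and bc: "boundary_conditions k P"
    and c: "c < 2*k"
  shows "P c = 0"
proof -
  obtain m where m: "m < k" and cm: "c = 2*m \<or> c = 2*m+1"
    using c by (rule less_double_cases)
  have ab: "alpha_pair P m = 0 \<and> beta_pair P m = 0" if "m < k" for m
    using alpha_beta_pairs_vanish[OF FT box bc that] .
  show ?thesis
    using cm fst_vanishes_if_alpha_beta_pairs_vanish[OF ab bc m]
      snd_vanishes_if_alpha_beta_pairs_vanish[of P m] ab[OF m]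
    by (auto simp: prod_eq_iff)
qed

lemma sum_symb_mult: "(\<Sum>c<p. symb A n r c * w c) = (\<Sum>c<p. \<Sum>j<4. A j r c * (nc j * w c))"
  unfolding symb_def nc_def by (simp add: sum_distrib_right mult.assoc)

lemma contract_normal: "contract cf (\<lambda>j c. nc j * w c) c = nsym cf * w c"
  by (simp add: contract_def nsym_def sum_distrib_right mult.assoc mult.left_commute)

lemma adj_D0_boundary_condition:
  assumes b1: "\<forall>r<k+1. (\<Sum>c<2*k. symb (adj (D0 k)) n r c * u c 0) = 0"
    and u0: "\<And>c. c < 2*k \<Longrightarrow> u c 0 = fst (P c)"
    and r: "r \<le> k"
  shows "(if r < k then alpha_nrm P r else 0) + (if 1 \<le> r then beta_nrm P (r-1) else 0) = 0"
proof -
  have "(\<Sum>c<2*k. symb (adj (D0 k)) n r c * u c 0) = 0" using b1 r by auto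
  then have "(if r < k then nsym dz1 * u (2*r) 0 - nsym dzb0 * u (2*r+1) 0 else 0)
     + (if 1 \<le> r then nsym dz0 * u (2*r-2) 0 + nsym dzb1 * u (2*r-1) 0 else 0) = 0"
    unfolding sum_symb_mult adj_D0_row_contract[OF r] contract_normal .
  moreover have "1 \<le> r \<Longrightarrow> 2*r-2 = 2*(r-1) \<and> 2*r-1 = 2*(r-1)+1" by auto
  ultimately show ?thesis
    using r by (auto simp: alpha_nrm_def beta_nrm_def u0 split: if_splits)
qed

lemma adj_D1_boundary_values_vanish:
  assumes b2: "\<forall>r<2*k. (\<Sum>c<k-1. symb (adj (D1 k)) n r c * W c) = 0"
    and q: "q + 2 \<le> k"
  shows "W q = 0"
proof -
  have W_rec: "(if q + 2 \<le> k then nsym dzb0 * W q else 0) - (if 1 \<le> q then nsym dzb1 * W (q-1) else 0) = 0"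
              "(if q + 2 \<le> k then nsym dz1 * W q else 0) + (if 1 \<le> q then nsym dz0 * W (q-1) else 0) = 0"
    if q: "q < k" for q
  proof -
    have "(\<Sum>p<k-1. symb (adj (D1 k)) n (2*q) p * W p) = 0"
         "(\<Sum>p<k-1. symb (adj (D1 k)) n (2*q+1) p * W p) = 0"
      using b2 q by auto
    then show "(if q + 2 \<le> k then nsym dzb0 * W q else 0) - (if 1 \<le> q then nsym dzb1 * W (q-1) else 0) = 0"
              "(if q + 2 \<le> k then nsym dz1 * W q else 0) + (if 1 \<le> q then nsym dz0 * W (q-1) else 0) = 0"
      unfolding sum_symb_mult adj_D1_even_row_contract[OF q] adj_D1_odd_row_contract[OF q] contract_normal
      by simp_all
  qed
  have nz: "\<not> (nsym dzb0 = 0 \<and> nsym dz1 = 0)" using nsym_quadratic by auto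
  show ?thesis
    using q
  proof (induction q)
    case 0
    then have "nsym dzb0 * W 0 = 0" "nsym dz1 * W 0 = 0" using W_rec[of 0] by auto
    then show ?case using nz by auto
  next
    case (Suc q)
    then have "nsym dzb0 * W (Suc q) = 0" "nsym dz1 * W (Suc q) = 0" using W_rec[of "Suc q"] by auto
    then show ?case using nz by auto
  qed
qed

lemma adj_D1_boundary_condition:
  assumes F: "\<And>c. c < 2*k \<Longrightarrow> deriv_tower (F c)"
    and uF: "\<And>c t. c < 2*k \<Longrightarrow> t \<ge> 0 \<Longrightarrow> u c t = F c 0 t"
    and FT: "\<And>c i t. c < 2*k \<Longrightarrow> t \<ge> 0 \<Longrightarrow> F c i t = expoly_tower (P c) i t"
    and b2: "\<forall>r<2*k. (\<Sum>c<k-1. symb (adj (D1 k)) n r c * apply_op (D1 k) (2*k) Psub u c 0) = 0"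
    and m: "m + 2 \<le> k"
  shows "fst (alpha_pair P (m+1)) = fst (beta_pair P m)"
proof -
  have "0 = apply_op (D1 k) (2*k) Psub u m 0"
    using adj_D1_boundary_values_vanish[OF b2 m] by simp
  also have "\<dots> = op_tower (D1 k) (2*k) F m 0 0"
    by (rule apply_op_deriv_tower[OF F uF]) auto
  also have "\<dots> = alpha F (m+1) 0 0 - beta F m 0 0"
    by (rule op_tower_D1_alpha_beta[OF m])
  also have "\<dots> = fst (alpha_pair P (m+1)) - fst (beta_pair P m)"
    using m by (simp add: alpha_beta_expoly_tower[OF FT] expoly_tower_0 expoly_def)
  finally show ?thesis by simp
qed

lemma boundary_conditions_hold:
  assumes k: "k \<ge> 1"
    and F: "\<And>c. c < 2*k \<Longrightarrow> deriv_tower (F c)"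
    and uF: "\<And>c t. c < 2*k \<Longrightarrow> t \<ge> 0 \<Longrightarrow> u c t = F c 0 t"
    and FT: "\<And>c i t. c < 2*k \<Longrightarrow> t \<ge> 0 \<Longrightarrow> F c i t = expoly_tower (P c) i t"
    and b1: "\<forall>r<k+1. (\<Sum>c<2*k. symb (adj (D0 k)) n r c * u c 0) = 0"
    and b2: "\<forall>r<2*k. (\<Sum>c<k-1. symb (adj (D1 k)) n r c * apply_op (D1 k) (2*k) Psub u c 0) = 0"
  shows "boundary_conditions k P"
proof -
  have u0: "u c 0 = fst (P c)" if "c < 2*k" for c
    using uF[OF that, of 0] FT[OF that, of 0 0] by (simp add: expoly_tower_0 expoly_def)
  have bc_adj_D0: "(if r < k then alpha_nrm P r else 0) + (if 1 \<le> r then beta_nrm P (r-1) else 0) = 0"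
    if "r \<le> k" for r
    using adj_D0_boundary_condition[where k=k and u=u and P=P, OF b1 u0 that] .
  show ?thesis
    unfolding boundary_conditions_def
  proof (intro conjI allI impI)
    show "alpha_nrm P 0 = 0" using bc_adj_D0[of 0] k by simp
    show "beta_nrm P (k-1) = 0" using bc_adj_D0[of k] k by simp
    fix m assume m: "m + 1 < k"
    then show "alpha_nrm P (m+1) + beta_nrm P m = 0" using bc_adj_D0[of "m+1"] by simp
    show "fst (alpha_pair P (m+1)) = fst (beta_pair P m)"
      using adj_D1_boundary_condition[OF F uF FT b2] m by simp
  qed
qed

lemma bounded_solution_expoly_towers:
  assumes sm: "\<forall>c<2*k. smooth_halfline (u c)"
    and bd: "\<forall>c<2*k. bounded (u c ` {0..})"
    and bx: "\<forall>r<2*k. \<forall>t\<ge>0. box1 k Psub u r t = 0"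
  obtains F P where "\<And>c. c < 2*k \<Longrightarrow> deriv_tower (F c)"
    and "\<And>c t. c < 2*k \<Longrightarrow> t \<ge> 0 \<Longrightarrow> u c t = F c 0 t"
    and "\<And>r t. r < 2*k \<Longrightarrow> t \<ge> 0 \<Longrightarrow> box_tower k F r 0 t = 0"
    and "\<And>c i t. c < 2*k \<Longrightarrow> t \<ge> 0 \<Longrightarrow> F c i t = expoly_tower (P c) i t"
proof -
  have "\<forall>c\<in>{..<2*k}. \<exists>G. deriv_tower G \<and> (\<forall>t\<ge>0. u c t = G 0 t)"
    using sm by (metis lessThan_iff smooth_halfline_deriv_tower)
  then obtain F where F: "\<And>c. c < 2*k \<Longrightarrow> deriv_tower (F c)"
    and uF: "\<And>c t. c < 2*k \<Longrightarrow> t \<ge> 0 \<Longrightarrow> u c t = F c 0 t"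
    by (metis bchoice lessThan_iff)
  have box: "box_tower k F r 0 t = 0" if "r < 2*k" "t \<ge> 0" for r t
    using box1_deriv_tower[where k=k and F=F and u=u and r=r and t=t, OF F uF that(2)] bx that
    by (simp add: box_tower_def)
  have "bounded (F c 0 ` {0..})" if "c < 2*k" for c
    using bd that uF[OF that] by (metis atLeast_iff image_cong)
  then have "\<forall>c\<in>{..<2*k}. \<exists>p. \<forall>t\<ge>0. F c 0 t = expoly p t"
    using bounded_solution_expoly[OF F box] by blast
  then obtain P where P: "\<And>c t. c < 2*k \<Longrightarrow> t \<ge> 0 \<Longrightarrow> F c 0 t = expoly (P c) t"
    by (metis bchoice lessThan_iff)
  have "F c i t = expoly_tower (P c) i t" if "c < 2*k" "t \<ge> 0" for c i t
    by (rule deriv_tower_unique[OF F[OF that(1)] expoly_tower_deriv_tower])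
       (use P that in \<open>auto simp: expoly_tower_0\<close>)
  with F uF box show thesis by (rule that)
qed

theorem bounded_solutions_vanish:
  fixes k :: nat and u :: "nat \<Rightarrow> real \<Rightarrow> complex"
  assumes k: "k \<ge> 1"
   and sm: "\<forall>c<2*k. smooth_halfline (u c)"
   and bd: "\<forall>c<2*k. bounded (u c ` {0..})"
   and bx: "\<forall>r<2*k. \<forall>t\<ge>0. box1 k Psub u r t = 0"
   and b1: "\<forall>r<k+1. (\<Sum>c<2*k. symb (adj (D0 k)) n r c * u c 0) = 0"
   and b2: "\<forall>r<2*k. (\<Sum>c<k-1. symb (adj (D1 k)) n r c * apply_op (D1 k) (2*k) Psub u c 0) = 0"
   and c: "c < 2*k" and t: "t \<ge> 0"
  shows "u c t = 0"
proof -
  obtain F P where F: "\<And>c. c < 2*k \<Longrightarrow> deriv_tower (F c)"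
    and uF: "\<And>c t. c < 2*k \<Longrightarrow> t \<ge> 0 \<Longrightarrow> u c t = F c 0 t"
    and box: "\<And>r t. r < 2*k \<Longrightarrow> t \<ge> 0 \<Longrightarrow> box_tower k F r 0 t = 0"
    and FT: "\<And>c i t. c < 2*k \<Longrightarrow> t \<ge> 0 \<Longrightarrow> F c i t = expoly_tower (P c) i t"
    using bounded_solution_expoly_towers[OF sm bd bx] by blast
  have "P c = 0"
    using expoly_solution_trivial[OF FT box boundary_conditions_hold[OF k F uF FT b1 b2] c] .
  then show ?thesis
    using uF[OF c t] FT[OF c t] by (simp add: expoly_tower_0 expoly_def zero_prod_def)
qed
end

text \<open>The regularity condition is pointwise on the boundary.\<close>

theorem mainTheorem7:
  fixes k :: nat and \<Omega> :: "(real^4) set" and \<nu> :: "real^4 \<Rightarrow> real^4"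
  assumes "k \<ge> 3"
    and "open \<Omega>" and "connected \<Omega>" and "\<Omega> \<noteq> {}"
    and "\<forall>x\<in>frontier \<Omega>. norm (\<nu> x) = 1"
  shows "SL_regular k \<Omega> \<nu>"
  unfolding SL_regular_def Let_def
proof (intro ballI allI impI, elim conjE)
  fix x \<xi> u c and t :: real
  assume x: "x \<in> frontier \<Omega>" and "\<xi> \<noteq> 0" "\<xi> \<bullet> \<nu> x = 0"
  interpret boundary_symbol \<xi> "- \<nu> x" "norm \<xi>"
  proof
    show "norm \<xi> > 0" using \<open>\<xi> \<noteq> 0\<close> by simp
    show "- \<nu> x \<bullet> - \<nu> x = 1" using assms(5) x by (simp add: norm_eq_sqrt_inner)
    show "\<xi> \<bullet> - \<nu> x = 0" using \<open>\<xi> \<bullet> \<nu> x = 0\<close> by simp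
    show "\<xi> \<bullet> \<xi> = (norm \<xi>)\<^sup>2" by (simp add: power2_norm_eq_inner)
  qed
  assume "\<forall>c<2*k. smooth_halfline (u c)" "\<forall>c<2*k. bounded (u c ` {0..})"
    "\<forall>r<2*k. \<forall>t\<ge>0. box1 k (subst_deriv \<xi> (- \<nu> x)) u r t = 0"
    "\<forall>r<k+1. (\<Sum>c<2*k. symb (adj (D0 k)) (- \<nu> x) r c * u c 0) = 0"
    "\<forall>r<2*k. (\<Sum>c<k-1. symb (adj (D1 k)) (- \<nu> x) r c *
                     apply_op (D1 k) (2*k) (subst_deriv \<xi> (- \<nu> x)) u c 0) = 0"
    "c < 2*k" "t \<ge> 0"
  then show "u c t = 0"
    using bounded_solutions_vanish[of k u c t] assms(1) by simp
qed

end
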